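(* Let $\mathbb{A}$ be a 2-category having the two-dimensional cokernel diagram of a 1-cell $p:e\to b$. Then: (1) provided that a right Kan extension $\mathrm{Ran}_pp$ of $p$ along $p$ exists and is preserved by $\delta^0:b\to b\uparrow_pb$, $p$ is monadic if and only if $p$ is an effective faithful morphism; (2) provided that a left Kan extension $\mathrm{Lan}_pp$ of $p$ along $p$ exists and is preserved by $\delta^1:b\to b\uparrow_pb$, $p$ is comonadic if and only if $p$ is an effective faithful morphism.
   Context: A 2-category is a $\mathbf{Cat}$-enriched category; composition of 1-cells is juxtaposition, vertical composition of 2-cells is $\cdot$, horizontal composition is $\ast$, $\mathrm{id}_f$ is the identity 2-cell on $f$. $\mathbb{A}^{\mathrm{co}}$ is obtained from $\mathbb{A}$ by reversing 2-cells. A 1-cell is an equivalence if it has a pseudo-inverse up to invertible 2-cells. Opcomma object of $p$ along itself: $b\uparrow_p b$ with $\delta^0,\delta^1:b\to b\uparrow_pb$ and $\alpha:\delta^1p\Rightarrow\delta^0p$ such that for every $y$, $h\mapsto(h\delta^0,h\delta^1,\mathrm{id}_h\ast\alpha)$, $\xi\mapsto(\xi\ast\mathrm{id}_{\delta^0},\xi\ast\mathrm{id}_{\delta^1})$ is an isomorphism from $\mathbb{A}(b\uparrow_pb,y)$ onto the category of triples $(h_0,h_1:b\to y,\beta:h_1p\Rightarrow h_0p)$ with morphisms pairs $(\xi_0,\xi_1)$ with $(\xi_0\ast\mathrm{id}_p)\cdot\beta=\beta'\cdot(\xi_1\ast\mathrm{id}_p)$. A two-dimensional pushout of a span $f_0:c\to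 c_0$, $f_1:c\to c_1$ is $P$ with $q_0,q_1$, $q_0f_0=q_1f_1$, such that $k\mapsto(kq_0,kq_1)$ is an isomorphism from $\mathbb{A}(P,y)$ onto the category of pairs $(k_0,k_1)$ with $k_0f_0=k_1f_1$ and morphisms pairs of 2-cells $(\xi_0,\xi_1)$ with $\xi_0\ast\mathrm{id}_{f_0}=\xi_1\ast\mathrm{id}_{f_1}$. $\mathbb{A}$ has the two-dimensional cokernel diagram of $p$ if it has $b\uparrow_pb$ and a two-dimensional pushout $b\uparrow_pb\uparrow_pb$ of $(\delta^0,\delta^1)$ with $D^0,D^2$, $D^2\delta^0=D^0\delta^1$; $D^1$ is the unique 1-cell with $D^1\delta^1=D^2\delta^1$, $D^1\delta^0=D^0\delta^0$, $\mathrm{id}_{D^1}\ast\alpha=(\mathrm{id}_{D^0}\ast\alpha)\cdot(\mathrm{id}_{D^2}\ast\alpha)$; $s^0$ is the unique 1-cell with $s^0\delta^0=s^0\delta^1=\mathrm{id}_b$, $\mathrm{id}_{s^0}\ast\alpha=\mathrm{id}_p$. Effective faithful: $\mathrm{Desc}_p(y)$ has objects $(h:y\to b,\beta:\delta^1h\Rightarrow\delta^0h)$ with $(\mathrm{id}_{D^0}\ast\beta)\cdot(\mathrm{id}_{D^2}\ast\beta)=\mathrm{id}_{D^1}\ast\beta$, $\mathrm{id}_{s^0}\ast\beta=\mathrm{id}_h$, morphisms 2-cells $\xi:h_1\Rightarrow h_0$ with $\beta_0\cdot(\mathrm{id}_{\delta^1}\ast\xi)=(\mathrm{id}_{\delta^0}\ast\xi)\cdot\beta_1$.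 A lax descent object is $L$ with $d:L\to b$, $\Psi:\delta^1d\Rightarrow\delta^0d$ such that $g\mapsto(dg,\Psi\ast\mathrm{id}_g)$, $\xi\mapsto\mathrm{id}_d\ast\xi$ is an isomorphism $\mathbb{A}(y,L)\cong\mathrm{Desc}_p(y)$ for all $y$; $p^H$ is the unique 1-cell with $dp^H=p$, $\Psi\ast\mathrm{id}_{p^H}=\alpha$. $p$ is an effective faithful morphism if $\mathbb{A}$ has the two-dimensional cokernel diagram of $p$, a lax descent object of it, and $p^H$ is an equivalence. Right Kan extension of $f$ along $g$: $(r,\gamma:rg\Rightarrow f)$ such that $\beta\mapsto\gamma\cdot(\beta\ast\mathrm{id}_g)$ is a bijection from 2-cells $k\Rightarrow r$ to 2-cells $kg\Rightarrow f$ for all $k$; a 1-cell $\delta$ preserves it if $(\delta r,\mathrm{id}_\delta\ast\gamma)$ is a right Kan extension of $\delta f$ along $g$. Codensity monad: from a right Kan extension $(t,\gamma)$ of $p$ along $p$, $(b,t,m,\eta)$ with $m$ unique such that $\gamma\cdot(m\ast\mathrm{id}_p)=\gamma\cdot(\mathrm{id}_t\ast\gamma)$ and $\eta$ unique with $\gamma\cdot(\eta\ast\mathrm{id}_p)=\mathrm{id}_p$. An Eilenberg–Moore object of a monad $\mathsf{T}=(b,t,m,\eta)$ is $b^{\mathsf{T}}$ with $u:b^{\mathsf{T}}\to b$, $\mu:tu\Rightarrow u$ such that $g\mapsto(ug,\mu\ast\mathrm{id}_g)$ is an isomorphism from $\mathbb{A}(y,b^{\mathsf{T}})$ onto the category of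 pairs $(h,\beta:th\Rightarrow h)$ with $\beta\cdot(\mathrm{id}_t\ast\beta)=\beta\cdot(m\ast\mathrm{id}_h)$, $\beta\cdot(\eta\ast\mathrm{id}_h)=\mathrm{id}_h$ (morphisms $\xi$ with $\xi\cdot\beta_1=\beta_0\cdot(\mathrm{id}_t\ast\xi)$). $p$ is monadic if it has a codensity monad $\mathsf{T}$, $\mathbb{A}$ has an Eilenberg–Moore object of $\mathsf{T}$, and the unique $p^{\mathsf{T}}$ with $up^{\mathsf{T}}=p$, $\mu\ast\mathrm{id}_{p^{\mathsf{T}}}=\gamma$ is an equivalence. Duals: a left Kan extension in $\mathbb{A}$ (and its preservation) means a right Kan extension (and its preservation) in $\mathbb{A}^{\mathrm{co}}$; $p$ is comonadic if the corresponding 1-cell of $\mathbb{A}^{\mathrm{co}}$ is monadic in $\mathbb{A}^{\mathrm{co}}$. *)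

theory Defs
  imports Main
begin

text \<open>Objects of type 'o, 1-cells of type 'a, 2-cells of type 'c.
  cmp g f is the composite "g f" (f first); vc beta alpha is beta . alpha
  (alpha first); hc beta alpha is beta * alpha where alpha is the 2-cell on the
  right (first) 1-cells; i2 f is id_f; ide x is the identity 1-cell.\<close>

record ('o,'a,'c) tcat =
  Obj  :: "'o set"
  Arr  :: "'a set"
  src  :: "'a \<Rightarrow> 'o"
  trg  :: "'a \<Rightarrow> 'o"
  Cell :: "'c set"
  dom2 :: "'c \<Rightarrow> 'a"
  cod2 :: "'c \<Rightarrow> 'a"
  cmp  :: "'a \<Rightarrow> 'a \<Rightarrow> 'a"
  ide  :: "'o \<Rightarrow> 'a"
  vc   :: "'c \<Rightarrow> 'c \<Rightarrow> 'c"
  hc   :: "'c \<Rightarrow> 'c \<Rightarrow> 'c"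
  i2   :: "'a \<Rightarrow> 'c"

definition hom :: "('o,'a,'c) tcat \<Rightarrow> 'o \<Rightarrow> 'o \<Rightarrow> 'a set" where
  "hom C x y = {f \<in> Arr C. src C f = x \<and> trg C f = y}"

definition cells :: "('o,'a,'c) tcat \<Rightarrow> 'a \<Rightarrow> 'a \<Rightarrow> 'c set" where
  "cells C f g = {\<theta> \<in> Cell C. dom2 C \<theta> = f \<and> cod2 C \<theta> = g}"

definition twocat :: "('o,'a,'c) tcat \<Rightarrow> bool" where
  "twocat C \<longleftrightarrow>
     (\<forall>f \<in> Arr C. src C f \<in> Obj C \<and> trg C f \<in> Obj C) \<and>
     (\<forall>x \<in> Obj C. ide C x \<in> hom C x x) \<and>
     (\<forall>f g. f \<in> Arr C \<longrightarrow> g \<in> Arr C \<longrightarrow> trg C f = src C g \<longrightarrow>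
        cmp C g f \<in> hom C (src C f) (trg C g)) \<and>
     (\<forall>f \<in> Arr C. cmp C f (ide C (src C f)) = f \<and> cmp C (ide C (trg C f)) f = f) \<and>
     (\<forall>f g h. f \<in> Arr C \<longrightarrow> g \<in> Arr C \<longrightarrow> h \<in> Arr C \<longrightarrow>
        trg C f = src C g \<longrightarrow> trg C g = src C h \<longrightarrow>
        cmp C h (cmp C g f) = cmp C (cmp C h g) f) \<and>
     (\<forall>\<theta> \<in> Cell C. dom2 C \<theta> \<in> Arr C \<and> cod2 C \<theta> \<in> Arr C \<and>
        src C (dom2 C \<theta>) = src C (cod2 C \<theta>) \<and> trg C (dom2 C \<theta>) = trg C (cod2 C \<theta>)) \<and>
     (\<forall>f \<in> Arr C. i2 C f \<in> cells C f f) \<and>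
     (\<forall>f g h \<alpha> \<beta>. \<alpha> \<in> cells C f g \<longrightarrow> \<beta> \<in> cells C g h \<longrightarrow> vc C \<beta> \<alpha> \<in> cells C f h) \<and>
     (\<forall>f g \<alpha>. \<alpha> \<in> cells C f g \<longrightarrow> vc C \<alpha> (i2 C f) = \<alpha> \<and> vc C (i2 C g) \<alpha> = \<alpha>) \<and>
     (\<forall>f g h k \<alpha> \<beta> \<gamma>. \<alpha> \<in> cells C f g \<longrightarrow> \<beta> \<in> cells C g h \<longrightarrow> \<gamma> \<in> cells C h k \<longrightarrow>
        vc C \<gamma> (vc C \<beta> \<alpha>) = vc C (vc C \<gamma> \<beta>) \<alpha>) \<and>
     (\<forall>f f' g g' \<alpha> \<beta>. \<alpha> \<in> cells C f f' \<longrightarrow> \<beta> \<in> cells C g g' \<longrightarrow> trg C f = src C g \<longrightarrow>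
        hc C \<beta> \<alpha> \<in> cells C (cmp C g f) (cmp C g' f')) \<and>
     (\<forall>f g. f \<in> Arr C \<longrightarrow> g \<in> Arr C \<longrightarrow> trg C f = src C g \<longrightarrow>
        hc C (i2 C g) (i2 C f) = i2 C (cmp C g f)) \<and>
     (\<forall>f f' f'' g g' g'' \<alpha> \<alpha>' \<beta> \<beta>'.
        \<alpha> \<in> cells C f f' \<longrightarrow> \<alpha>' \<in> cells C f' f'' \<longrightarrow>
        \<beta> \<in> cells C g g' \<longrightarrow> \<beta>' \<in> cells C g' g'' \<longrightarrow> trg C f = src C g \<longrightarrow>
        hc C (vc C \<beta>' \<beta>) (vc C \<alpha>' \<alpha>) = vc C (hc C \<beta>' \<alpha>') (hc C \<beta> \<alpha>)) \<and>
     (\<forall>f f' g g' h h' \<alpha> \<beta> \<gamma>. \<alpha> \<in> cells C f f' \<longrightarrow> \<beta> \<in> cells C g g' \<longrightarrow> \<gamma> \<in> cells C h h' \<longrightarrow>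
        trg C f = src C g \<longrightarrow> trg C g = src C h \<longrightarrow>
        hc C \<gamma> (hc C \<beta> \<alpha>) = hc C (hc C \<gamma> \<beta>) \<alpha>) \<and>
     (\<forall>f f' \<alpha>. \<alpha> \<in> cells C f f' \<longrightarrow>
        hc C (i2 C (ide C (trg C f))) \<alpha> = \<alpha> \<and> hc C \<alpha> (i2 C (ide C (src C f))) = \<alpha>)"

definition co :: "('o,'a,'c) tcat \<Rightarrow> ('o,'a,'c) tcat" where
  "co C = C\<lparr>dom2 := cod2 C, cod2 := dom2 C, vc := (\<lambda>\<beta> \<alpha>. vc C \<alpha> \<beta>)\<rparr>"

definition invertible2 :: "('o,'a,'c) tcat \<Rightarrow> 'c \<Rightarrow> bool" where
  "invertible2 C \<theta> \<longleftrightarrow> \<theta> \<in> Cell C \<and>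
     (\<exists>\<theta>' \<in> cells C (cod2 C \<theta>) (dom2 C \<theta>).
        vc C \<theta>' \<theta> = i2 C (dom2 C \<theta>) \<and> vc C \<theta> \<theta>' = i2 C (cod2 C \<theta>))"

definition equivalence :: "('o,'a,'c) tcat \<Rightarrow> 'a \<Rightarrow> bool" where
  "equivalence C f \<longleftrightarrow> f \<in> Arr C \<and>
     (\<exists>g \<in> hom C (trg C f) (src C f).
        (\<exists>\<eta> \<in> cells C (ide C (src C f)) (cmp C g f). invertible2 C \<eta>) \<and>
        (\<exists>\<epsilon> \<in> cells C (cmp C f g) (ide C (trg C f)). invertible2 C \<epsilon>))"

text \<open>Opcomma object (P, d0, d1, alpha) of p along itself; b = trg p.
  "Isomorphism of categories" is spelled out as bijectivity on objects and
  on each hom-set of the comparison functor.\<close>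
definition opcomma :: "('o,'a,'c) tcat \<Rightarrow> 'a \<Rightarrow> 'o \<Rightarrow> 'a \<Rightarrow> 'a \<Rightarrow> 'c \<Rightarrow> bool" where
  "opcomma C p P d0 d1 \<alpha> \<longleftrightarrow>
     p \<in> Arr C \<and> P \<in> Obj C \<and> d0 \<in> hom C (trg C p) P \<and> d1 \<in> hom C (trg C p) P \<and>
     \<alpha> \<in> cells C (cmp C d1 p) (cmp C d0 p) \<and>
     (\<forall>y \<in> Obj C.
        bij_betw (\<lambda>h. (cmp C h d0, cmp C h d1, hc C (i2 C h) \<alpha>)) (hom C P y)
          {(h0, h1, \<beta>). h0 \<in> hom C (trg C p) y \<and> h1 \<in> hom C (trg C p) y \<and>
                       \<beta> \<in> cells C (cmp C h1 p) (cmp C h0 p)} \<and>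
        (\<forall>h \<in> hom C P y. \<forall>h' \<in> hom C P y.
          bij_betw (\<lambda>\<xi>. (hc C \<xi> (i2 C d0), hc C \<xi> (i2 C d1))) (cells C h h')
            {(\<xi>0, \<xi>1). \<xi>0 \<in> cells C (cmp C h d0) (cmp C h' d0) \<and>
                       \<xi>1 \<in> cells C (cmp C h d1) (cmp C h' d1) \<and>
                       vc C (hc C \<xi>0 (i2 C p)) (hc C (i2 C h) \<alpha>) =
                       vc C (hc C (i2 C h') \<alpha>) (hc C \<xi>1 (i2 C p))}))"

definition pushout2 :: "('o,'a,'c) tcat \<Rightarrow> 'a \<Rightarrow> 'a \<Rightarrow> 'o \<Rightarrow> 'a \<Rightarrow> 'a \<Rightarrow> bool" where
  "pushout2 C f0 f1 P q0 q1 \<longleftrightarrow>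
     f0 \<in> Arr C \<and> f1 \<in> Arr C \<and> src C f0 = src C f1 \<and> P \<in> Obj C \<and>
     q0 \<in> hom C (trg C f0) P \<and> q1 \<in> hom C (trg C f1) P \<and> cmp C q0 f0 = cmp C q1 f1 \<and>
     (\<forall>y \<in> Obj C.
        bij_betw (\<lambda>k. (cmp C k q0, cmp C k q1)) (hom C P y)
          {(k0, k1). k0 \<in> hom C (trg C f0) y \<and> k1 \<in> hom C (trg C f1) y \<and>
                     cmp C k0 f0 = cmp C k1 f1} \<and>
        (\<forall>k \<in> hom C P y. \<forall>k' \<in> hom C P y.
          bij_betw (\<lambda>\<xi>. (hc C \<xi> (i2 C q0), hc C \<xi> (i2 C q1))) (cells C k k')
            {(\<xi>0, \<xi>1). \<xi>0 \<in> cells C (cmp C k q0) (cmp C k' q0) \<and>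
                       \<xi>1 \<in> cells C (cmp C k q1) (cmp C k' q1) \<and>
                       hc C \<xi>0 (i2 C f0) = hc C \<xi>1 (i2 C f1)}))"

text \<open>The two-dimensional cokernel diagram of p: an opcomma object
  (P, d0, d1, alpha) together with a two-dimensional pushout P3 of (d0, d1)
  with legs D2 (along d0) and D0 (along d1), so D2 d0 = D0 d1.\<close>
definition cokernel_diagram ::
  "('o,'a,'c) tcat \<Rightarrow> 'a \<Rightarrow> 'o \<Rightarrow> 'a \<Rightarrow> 'a \<Rightarrow> 'c \<Rightarrow> 'o \<Rightarrow> 'a \<Rightarrow> 'a \<Rightarrow> bool" where
  "cokernel_diagram C p P d0 d1 \<alpha> P3 D0 D2 \<longleftrightarrow>
     opcomma C p P d0 d1 \<alpha> \<and> pushout2 C d0 d1 P3 D2 D0"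

definition cokD1 :: "('o,'a,'c) tcat \<Rightarrow> 'a \<Rightarrow> 'o \<Rightarrow> 'a \<Rightarrow> 'a \<Rightarrow> 'c \<Rightarrow> 'o \<Rightarrow> 'a \<Rightarrow> 'a \<Rightarrow> 'a" where
  "cokD1 C p P d0 d1 \<alpha> P3 D0 D2 = (THE h. h \<in> hom C P P3 \<and>
      cmp C h d1 = cmp C D2 d1 \<and> cmp C h d0 = cmp C D0 d0 \<and>
      hc C (i2 C h) \<alpha> = vc C (hc C (i2 C D0) \<alpha>) (hc C (i2 C D2) \<alpha>))"

definition cokS0 :: "('o,'a,'c) tcat \<Rightarrow> 'a \<Rightarrow> 'o \<Rightarrow> 'a \<Rightarrow> 'a \<Rightarrow> 'c \<Rightarrow> 'a" where
  "cokS0 C p P d0 d1 \<alpha> = (THE h. h \<in> hom C P (trg C p) \<and>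
      cmp C h d0 = ide C (trg C p) \<and> cmp C h d1 = ide C (trg C p) \<and>
      hc C (i2 C h) \<alpha> = i2 C p)"

definition desc_obj ::
  "('o,'a,'c) tcat \<Rightarrow> 'a \<Rightarrow> 'o \<Rightarrow> 'a \<Rightarrow> 'a \<Rightarrow> 'c \<Rightarrow> 'o \<Rightarrow> 'a \<Rightarrow> 'a \<Rightarrow> 'o \<Rightarrow> ('a \<times> 'c) set" where
  "desc_obj C p P d0 d1 \<alpha> P3 D0 D2 y =
     {(h, \<beta>). h \<in> hom C y (trg C p) \<and> \<beta> \<in> cells C (cmp C d1 h) (cmp C d0 h) \<and>
        vc C (hc C (i2 C D0) \<beta>) (hc C (i2 C D2) \<beta>) =
          hc C (i2 C (cokD1 C p P d0 d1 \<alpha> P3 D0 D2)) \<beta> \<and>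
        hc C (i2 C (cokS0 C p P d0 d1 \<alpha>)) \<beta> = i2 C h}"

text \<open>Morphisms of Desc_p(y) from (h1, beta1) to (h0, beta0).\<close>
definition desc_mor ::
  "('o,'a,'c) tcat \<Rightarrow> 'a \<Rightarrow> 'a \<Rightarrow> 'a \<Rightarrow> 'c \<Rightarrow> 'a \<Rightarrow> 'c \<Rightarrow> 'c set" where
  "desc_mor C d0 d1 h1 \<beta>1 h0 \<beta>0 =
     {\<xi> \<in> cells C h1 h0. vc C \<beta>0 (hc C (i2 C d1) \<xi>) = vc C (hc C (i2 C d0) \<xi>) \<beta>1}"

definition lax_descent ::
  "('o,'a,'c) tcat \<Rightarrow> 'a \<Rightarrow> 'o \<Rightarrow> 'a \<Rightarrow> 'a \<Rightarrow> 'c \<Rightarrow> 'o \<Rightarrow> 'a \<Rightarrow> 'a \<Rightarrow> 'o \<Rightarrow> 'a \<Rightarrow> 'c \<Rightarrow> bool" where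
  "lax_descent C p P d0 d1 \<alpha> P3 D0 D2 L d \<Psi> \<longleftrightarrow>
     L \<in> Obj C \<and> d \<in> hom C L (trg C p) \<and> \<Psi> \<in> cells C (cmp C d1 d) (cmp C d0 d) \<and>
     (\<forall>y \<in> Obj C.
        bij_betw (\<lambda>g. (cmp C d g, hc C \<Psi> (i2 C g))) (hom C y L)
          (desc_obj C p P d0 d1 \<alpha> P3 D0 D2 y) \<and>
        (\<forall>g \<in> hom C y L. \<forall>g' \<in> hom C y L.
          bij_betw (\<lambda>\<xi>. hc C (i2 C d) \<xi>) (cells C g g')
            (desc_mor C d0 d1 (cmp C d g) (hc C \<Psi> (i2 C g)) (cmp C d g') (hc C \<Psi> (i2 C g')))))"

definition pH :: "('o,'a,'c) tcat \<Rightarrow> 'a \<Rightarrow> 'c \<Rightarrow> 'o \<Rightarrow> 'a \<Rightarrow> 'c \<Rightarrow> 'a" where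
  "pH C p \<alpha> L d \<Psi> = (THE k. k \<in> hom C (src C p) L \<and> cmp C d k = p \<and> hc C \<Psi> (i2 C k) = \<alpha>)"

definition effective_faithful ::
  "('o,'a,'c) tcat \<Rightarrow> 'a \<Rightarrow> 'o \<Rightarrow> 'a \<Rightarrow> 'a \<Rightarrow> 'c \<Rightarrow> 'o \<Rightarrow> 'a \<Rightarrow> 'a \<Rightarrow> bool" where
  "effective_faithful C p P d0 d1 \<alpha> P3 D0 D2 \<longleftrightarrow>
     cokernel_diagram C p P d0 d1 \<alpha> P3 D0 D2 \<and>
     (\<exists>L d \<Psi>. lax_descent C p P d0 d1 \<alpha> P3 D0 D2 L d \<Psi> \<and> equivalence C (pH C p \<alpha> L d \<Psi>))"

definition ran :: "('o,'a,'c) tcat \<Rightarrow> 'a \<Rightarrow> 'a \<Rightarrow> 'a \<Rightarrow> 'c \<Rightarrow> bool" where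
  "ran C g f r \<gamma> \<longleftrightarrow>
     g \<in> Arr C \<and> f \<in> Arr C \<and> src C g = src C f \<and>
     r \<in> hom C (trg C g) (trg C f) \<and> \<gamma> \<in> cells C (cmp C r g) f \<and>
     (\<forall>k \<in> hom C (trg C g) (trg C f).
        bij_betw (\<lambda>\<beta>. vc C \<gamma> (hc C \<beta> (i2 C g))) (cells C k r) (cells C (cmp C k g) f))"

definition preserves_ran :: "('o,'a,'c) tcat \<Rightarrow> 'a \<Rightarrow> 'a \<Rightarrow> 'a \<Rightarrow> 'c \<Rightarrow> 'a \<Rightarrow> bool" where
  "preserves_ran C g f r \<gamma> \<delta> \<longleftrightarrow>
     \<delta> \<in> Arr C \<and> src C \<delta> = trg C f \<and> ran C g (cmp C \<delta> f) (cmp C \<delta> r) (hc C (i2 C \<delta>) \<gamma>)"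

definition lan :: "('o,'a,'c) tcat \<Rightarrow> 'a \<Rightarrow> 'a \<Rightarrow> 'a \<Rightarrow> 'c \<Rightarrow> bool" where
  "lan C g f r \<gamma> \<longleftrightarrow> ran (co C) g f r \<gamma>"

definition preserves_lan :: "('o,'a,'c) tcat \<Rightarrow> 'a \<Rightarrow> 'a \<Rightarrow> 'a \<Rightarrow> 'c \<Rightarrow> 'a \<Rightarrow> bool" where
  "preserves_lan C g f r \<gamma> \<delta> \<longleftrightarrow> preserves_ran (co C) g f r \<gamma> \<delta>"

definition cod_mult :: "('o,'a,'c) tcat \<Rightarrow> 'a \<Rightarrow> 'a \<Rightarrow> 'c \<Rightarrow> 'c" where
  "cod_mult C p t \<gamma> = (THE m. m \<in> cells C (cmp C t t) t \<and>
      vc C \<gamma> (hc C m (i2 C p)) = vc C \<gamma> (hc C (i2 C t) \<gamma>))"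

definition cod_unit :: "('o,'a,'c) tcat \<Rightarrow> 'a \<Rightarrow> 'a \<Rightarrow> 'c \<Rightarrow> 'c" where
  "cod_unit C p t \<gamma> = (THE \<eta>. \<eta> \<in> cells C (ide C (trg C p)) t \<and>
      vc C \<gamma> (hc C \<eta> (i2 C p)) = i2 C p)"

definition em_object ::
  "('o,'a,'c) tcat \<Rightarrow> 'o \<Rightarrow> 'a \<Rightarrow> 'c \<Rightarrow> 'c \<Rightarrow> 'o \<Rightarrow> 'a \<Rightarrow> 'c \<Rightarrow> bool" where
  "em_object C b t m \<eta> B u \<mu> \<longleftrightarrow>
     B \<in> Obj C \<and> u \<in> hom C B b \<and> \<mu> \<in> cells C (cmp C t u) u \<and>
     (\<forall>y \<in> Obj C.
        bij_betw (\<lambda>g. (cmp C u g, hc C \<mu> (i2 C g))) (hom C y B)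
          {(h, \<beta>). h \<in> hom C y b \<and> \<beta> \<in> cells C (cmp C t h) h \<and>
             vc C \<beta> (hc C (i2 C t) \<beta>) = vc C \<beta> (hc C m (i2 C h)) \<and>
             vc C \<beta> (hc C \<eta> (i2 C h)) = i2 C h} \<and>
        (\<forall>g \<in> hom C y B. \<forall>g' \<in> hom C y B.
          bij_betw (\<lambda>\<xi>. hc C (i2 C u) \<xi>) (cells C g g')
            {\<xi> \<in> cells C (cmp C u g) (cmp C u g').
               vc C \<xi> (hc C \<mu> (i2 C g)) = vc C (hc C \<mu> (i2 C g')) (hc C (i2 C t) \<xi>)}))"

definition pT :: "('o,'a,'c) tcat \<Rightarrow> 'a \<Rightarrow> 'c \<Rightarrow> 'o \<Rightarrow> 'a \<Rightarrow> 'c \<Rightarrow> 'a" where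
  "pT C p \<gamma> B u \<mu> = (THE k. k \<in> hom C (src C p) B \<and> cmp C u k = p \<and> hc C \<mu> (i2 C k) = \<gamma>)"

definition monadic :: "('o,'a,'c) tcat \<Rightarrow> 'a \<Rightarrow> bool" where
  "monadic C p \<longleftrightarrow>
     (\<exists>t \<gamma>. ran C p p t \<gamma> \<and>
        (\<exists>B u \<mu>. em_object C (trg C p) t (cod_mult C p t \<gamma>) (cod_unit C p t \<gamma>) B u \<mu> \<and>
                  equivalence C (pT C p \<gamma> B u \<mu>)))"

definition comonadic :: "('o,'a,'c) tcat \<Rightarrow> 'a \<Rightarrow> bool" where
  "comonadic C p \<longleftrightarrow> monadic (co C) p"

end

theory Submission
  imports Defs
begin

text \<open>
  If \<open>\<delta>\<^sup>0\<close> preserves \<open>Ran\<^sub>p p = (t, \<gamma>)\<close>, the opcomma cell factors as \<open>\<alpha> = \<delta>\<^sup>0\<gamma> \<cdot> \<sigma>p\<close>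
  for a 2-cell \<open>\<sigma> : \<delta>\<^sup>1 \<Rightarrow> \<delta>\<^sup>0t\<close>. The 1-cell \<open>r : b\<up>\<^sub>pb \<rightarrow> b\<close> induced by \<open>(1, t, \<gamma>)\<close> then
  gives a bijection \<open>\<beta> \<mapsto> r\<beta>\<close> from 2-cells \<open>\<delta>\<^sup>1h \<Rightarrow> \<delta>\<^sup>0h\<close> to 2-cells \<open>th \<Rightarrow> h\<close>, with
  inverse \<open>\<theta> \<mapsto> \<delta>\<^sup>0\<theta> \<cdot> \<sigma>h\<close>. The unit and multiplication of the codensity monad are
  the images of \<open>\<sigma>\<close> under \<open>s\<^sup>0\<close> and \<open>RD\<^sup>1\<close>, where \<open>R\<close> is induced on the pushout by
  \<open>(tr, r)\<close>; so the bijection turns the normalisation and cocycle conditions on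
  descent data into the unit and associativity laws of algebras. Hence descent data
  and algebras correspond naturally, lax descent objects are exactly Eilenberg--Moore
  objects, and \<open>p\<^sup>H = p\<^sup>T\<close>. The comonadic case is the same statement in \<open>\<AA>\<^sup>c\<^sup>o\<close>,
  where \<open>\<delta>\<^sup>0\<close> and \<open>\<delta>\<^sup>1\<close> exchange roles.
\<close>

section \<open>Strict 2-categories\<close>

locale two_category =
  fixes C :: "('o,'a,'c) tcat"
  assumes obj_src_trg: "\<And>f. f \<in> Arr C \<Longrightarrow> src C f \<in> Obj C \<and> trg C f \<in> Obj C"
    and ide_hom: "\<And>x. x \<in> Obj C \<Longrightarrow> ide C x \<in> hom C x x"
    and comp_hom: "\<And>f g. f \<in> Arr C \<Longrightarrow> g \<in> Arr C \<Longrightarrow> trg C f = src C g \<Longrightarrow>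
       cmp C g f \<in> hom C (src C f) (trg C g)"
    and comp_ide: "\<And>f. f \<in> Arr C \<Longrightarrow> cmp C f (ide C (src C f)) = f \<and> cmp C (ide C (trg C f)) f = f"
    and comp_assoc': "\<And>f g h. f \<in> Arr C \<Longrightarrow> g \<in> Arr C \<Longrightarrow> h \<in> Arr C \<Longrightarrow>
       trg C f = src C g \<Longrightarrow> trg C g = src C h \<Longrightarrow> cmp C h (cmp C g f) = cmp C (cmp C h g) f"
    and cell_arrs: "\<And>\<theta>. \<theta> \<in> Cell C \<Longrightarrow> dom2 C \<theta> \<in> Arr C \<and> cod2 C \<theta> \<in> Arr C \<and>
       src C (dom2 C \<theta>) = src C (cod2 C \<theta>) \<and> trg C (dom2 C \<theta>) = trg C (cod2 C \<theta>)"
    and id2_cells: "\<And>f. f \<in> Arr C \<Longrightarrow> i2 C f \<in> cells C f f"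
    and vcomp_cells: "\<And>f g h \<alpha> \<beta>. \<alpha> \<in> cells C f g \<Longrightarrow> \<beta> \<in> cells C g h \<Longrightarrow> vc C \<beta> \<alpha> \<in> cells C f h"
    and vcomp_id: "\<And>f g \<alpha>. \<alpha> \<in> cells C f g \<Longrightarrow> vc C \<alpha> (i2 C f) = \<alpha> \<and> vc C (i2 C g) \<alpha> = \<alpha>"
    and vcomp_assoc: "\<And>f g h k \<alpha> \<beta> \<gamma>. \<alpha> \<in> cells C f g \<Longrightarrow> \<beta> \<in> cells C g h \<Longrightarrow> \<gamma> \<in> cells C h k \<Longrightarrow>
       vc C \<gamma> (vc C \<beta> \<alpha>) = vc C (vc C \<gamma> \<beta>) \<alpha>"
    and hcomp_cells: "\<And>f f' g g' \<alpha> \<beta>. \<alpha> \<in> cells C f f' \<Longrightarrow> \<beta> \<in> cells C g g' \<Longrightarrow> trg C f = src C g \<Longrightarrow>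
       hc C \<beta> \<alpha> \<in> cells C (cmp C g f) (cmp C g' f')"
    and hcomp_id2: "\<And>f g. f \<in> Arr C \<Longrightarrow> g \<in> Arr C \<Longrightarrow> trg C f = src C g \<Longrightarrow>
       hc C (i2 C g) (i2 C f) = i2 C (cmp C g f)"
    and interchange: "\<And>f f' f'' g g' g'' \<alpha> \<alpha>' \<beta> \<beta>'. \<alpha> \<in> cells C f f' \<Longrightarrow> \<alpha>' \<in> cells C f' f'' \<Longrightarrow>
       \<beta> \<in> cells C g g' \<Longrightarrow> \<beta>' \<in> cells C g' g'' \<Longrightarrow> trg C f = src C g \<Longrightarrow>
       hc C (vc C \<beta>' \<beta>) (vc C \<alpha>' \<alpha>) = vc C (hc C \<beta>' \<alpha>') (hc C \<beta> \<alpha>)"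
    and hcomp_assoc: "\<And>f f' g g' h h' \<alpha> \<beta> \<gamma>. \<alpha> \<in> cells C f f' \<Longrightarrow> \<beta> \<in> cells C g g' \<Longrightarrow>
       \<gamma> \<in> cells C h h' \<Longrightarrow> trg C f = src C g \<Longrightarrow> trg C g = src C h \<Longrightarrow>
       hc C \<gamma> (hc C \<beta> \<alpha>) = hc C (hc C \<gamma> \<beta>) \<alpha>"
    and hcomp_unit: "\<And>f f' \<alpha>. \<alpha> \<in> cells C f f' \<Longrightarrow>
       hc C (i2 C (ide C (trg C f))) \<alpha> = \<alpha> \<and> hc C \<alpha> (i2 C (ide C (src C f))) = \<alpha>"

lemma two_category_iff_twocat: "two_category C \<longleftrightarrow> twocat C"
  unfolding twocat_def two_category_def Ball_def by (simp only: conj_assoc)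

context two_category
begin

abbreviation comp1 (infixr "\<odot>" 60) where "g \<odot> f \<equiv> cmp C g f"
abbreviation vcomp (infixr "\<bullet>" 53) where "\<beta> \<bullet> \<alpha> \<equiv> vc C \<beta> \<alpha>"
abbreviation hcomp (infixr "\<star>" 56) where "\<beta> \<star> \<alpha> \<equiv> hc C \<beta> \<alpha>"
abbreviation id2 where "id2 f \<equiv> i2 C f"
abbreviation whisker_left (infixr "\<triangleright>" 57) where "f \<triangleright> \<theta> \<equiv> hc C (i2 C f) \<theta>"
abbreviation whisker_right (infixl "\<triangleleft>" 58) where "\<theta> \<triangleleft> f \<equiv> hc C \<theta> (i2 C f)"

lemma hom_iff: "f \<in> hom C x y \<longleftrightarrow> f \<in> Arr C \<and> src C f = x \<and> trg C f = y"
  by (simp add: hom_def)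

lemma obj_hom: "f \<in> hom C x y \<Longrightarrow> x \<in> Obj C \<and> y \<in> Obj C"
  using obj_src_trg by (auto simp: hom_iff)

lemma ide_arr [simp]: "x \<in> Obj C \<Longrightarrow> ide C x \<in> Arr C"
  and src_ide [simp]: "x \<in> Obj C \<Longrightarrow> src C (ide C x) = x"
  and trg_ide [simp]: "x \<in> Obj C \<Longrightarrow> trg C (ide C x) = x"
  using ide_hom by (auto simp: hom_iff)

lemma comp_arr [simp]: "f \<in> Arr C \<Longrightarrow> g \<in> Arr C \<Longrightarrow> trg C f = src C g \<Longrightarrow> g \<odot> f \<in> Arr C"
  and src_comp [simp]: "f \<in> Arr C \<Longrightarrow> g \<in> Arr C \<Longrightarrow> trg C f = src C g \<Longrightarrow> src C (g \<odot> f) = src C f"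
  and trg_comp [simp]: "f \<in> Arr C \<Longrightarrow> g \<in> Arr C \<Longrightarrow> trg C f = src C g \<Longrightarrow> trg C (g \<odot> f) = trg C g"
  using comp_hom by (auto simp: hom_iff)

lemma comp_ide_right [simp]: "f \<in> Arr C \<Longrightarrow> src C f = x \<Longrightarrow> f \<odot> ide C x = f"
  and comp_ide_left [simp]: "f \<in> Arr C \<Longrightarrow> trg C f = y \<Longrightarrow> ide C y \<odot> f = f"
  using comp_ide by auto

lemma comp_assoc [simp]:
  "f \<in> Arr C \<Longrightarrow> g \<in> Arr C \<Longrightarrow> h \<in> Arr C \<Longrightarrow> trg C f = src C g \<Longrightarrow> trg C g = src C h \<Longrightarrow>
   (h \<odot> g) \<odot> f = h \<odot> g \<odot> f"
  using comp_assoc' by simp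

lemma cells_arr:
  "\<theta> \<in> cells C f g \<Longrightarrow> f \<in> Arr C \<and> g \<in> Arr C \<and> src C g = src C f \<and> trg C g = trg C f"
  using cell_arrs by (auto simp: cells_def)

lemma vcomp_id_left: "\<alpha> \<in> cells C f g \<Longrightarrow> id2 g \<bullet> \<alpha> = \<alpha>"
  and vcomp_id_right: "\<alpha> \<in> cells C f g \<Longrightarrow> \<alpha> \<bullet> id2 f = \<alpha>"
  using vcomp_id by blast+

lemma whisker_left_ide: "\<alpha> \<in> cells C f f' \<Longrightarrow> trg C f = y \<Longrightarrow> ide C y \<triangleright> \<alpha> = \<alpha>"
  and whisker_right_ide: "\<alpha> \<in> cells C f f' \<Longrightarrow> src C f = x \<Longrightarrow> \<alpha> \<triangleleft> ide C x = \<alpha>"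
  using hcomp_unit by blast+

lemma whisker_left_cells:
  "\<alpha> \<in> cells C f f' \<Longrightarrow> k \<in> Arr C \<Longrightarrow> trg C f = src C k \<Longrightarrow> k \<triangleright> \<alpha> \<in> cells C (k \<odot> f) (k \<odot> f')"
  using hcomp_cells id2_cells by blast

lemma whisker_right_cells:
  "\<alpha> \<in> cells C f f' \<Longrightarrow> k \<in> Arr C \<Longrightarrow> trg C k = src C f \<Longrightarrow> \<alpha> \<triangleleft> k \<in> cells C (f \<odot> k) (f' \<odot> k)"
  using hcomp_cells id2_cells by blast

lemma whisker_left_vcomp:
  assumes "\<alpha> \<in> cells C f g" "\<beta> \<in> cells C g h" "k \<in> Arr C" "trg C f = src C k"
  shows "k \<triangleright> (\<beta> \<bullet> \<alpha>) = (k \<triangleright> \<beta>) \<bullet> (k \<triangleright> \<alpha>)"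
  using interchange[OF assms(1,2) id2_cells id2_cells, of k] vcomp_id_left[OF id2_cells] assms by simp

lemma whisker_right_vcomp:
  assumes "\<alpha> \<in> cells C f g" "\<beta> \<in> cells C g h" "k \<in> Arr C" "trg C k = src C f"
  shows "(\<beta> \<bullet> \<alpha>) \<triangleleft> k = (\<beta> \<triangleleft> k) \<bullet> (\<alpha> \<triangleleft> k)"
  using interchange[OF id2_cells id2_cells assms(1,2), of k] vcomp_id_left[OF id2_cells] assms by simp

lemma whisker_left_comp:
  "\<alpha> \<in> cells C a a' \<Longrightarrow> f \<in> Arr C \<Longrightarrow> g \<in> Arr C \<Longrightarrow> trg C a = src C f \<Longrightarrow> trg C f = src C g \<Longrightarrow>
   g \<triangleright> f \<triangleright> \<alpha> = (g \<odot> f) \<triangleright> \<alpha>"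
  using hcomp_assoc[OF _ id2_cells id2_cells] hcomp_id2 by metis

lemma whisker_right_comp:
  "\<alpha> \<in> cells C a a' \<Longrightarrow> f \<in> Arr C \<Longrightarrow> g \<in> Arr C \<Longrightarrow> trg C f = src C a \<Longrightarrow> trg C g = src C f \<Longrightarrow>
   \<alpha> \<triangleleft> f \<triangleleft> g = \<alpha> \<triangleleft> (f \<odot> g)"
  using hcomp_assoc[OF id2_cells id2_cells] hcomp_id2 cells_arr by metis

lemma whisker_left_right:
  "\<alpha> \<in> cells C a a' \<Longrightarrow> f \<in> Arr C \<Longrightarrow> g \<in> Arr C \<Longrightarrow> trg C f = src C a \<Longrightarrow> trg C a = src C g \<Longrightarrow>
   (g \<triangleright> \<alpha>) \<triangleleft> f = g \<triangleright> (\<alpha> \<triangleleft> f)"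
  using hcomp_assoc[OF id2_cells _ id2_cells] by metis

lemma hcomp_eq_whiskers:
  assumes "\<alpha> \<in> cells C f f'" "\<beta> \<in> cells C g g'" "trg C f = src C g"
  shows "\<beta> \<star> \<alpha> = (\<beta> \<triangleleft> f') \<bullet> (g \<triangleright> \<alpha>)" and "\<beta> \<star> \<alpha> = (g' \<triangleright> \<alpha>) \<bullet> (\<beta> \<triangleleft> f)"
proof -
  have arr: "f \<in> Arr C" "f' \<in> Arr C" "g \<in> Arr C" "g' \<in> Arr C" "trg C f' = src C g" "trg C f = src C g'"
    using assms cells_arr by auto
  show "\<beta> \<star> \<alpha> = (\<beta> \<triangleleft> f') \<bullet> (g \<triangleright> \<alpha>)"
    using interchange[OF assms(1) id2_cells id2_cells assms(2)] arr assms
      vcomp_id_right[OF assms(2)] vcomp_id_left[OF assms(1)] by simp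
  show "\<beta> \<star> \<alpha> = (g' \<triangleright> \<alpha>) \<bullet> (\<beta> \<triangleleft> f)"
    using interchange[OF id2_cells assms(1) assms(2) id2_cells] arr assms
      vcomp_id_left[OF assms(2)] vcomp_id_right[OF assms(1)] by simp
qed

lemma cell_eq_through_unit:
  assumes \<iota>: "\<iota> \<in> cells C (ide C x) g" "\<iota> \<triangleleft> f0 = id2 f0"
    and \<phi>: "\<phi> \<in> cells C (f1 \<odot> h1) (f0 \<odot> h0)"
    and arr: "f0 \<in> Arr C" "f1 \<in> Arr C" "h0 \<in> Arr C" "h1 \<in> Arr C"
    "trg C h0 = src C f0" "trg C h1 = src C f1" "trg C f0 = x"
  shows "\<phi> = (g \<triangleright> \<phi>) \<bullet> (\<iota> \<triangleleft> (f1 \<odot> h1))"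
proof -
  have x: "x \<in> Obj C" using arr obj_src_trg by blast
  have ends: "trg C (f1 \<odot> h1) = x" "trg C (f0 \<odot> h0) = x"
    using cells_arr[OF \<phi>] arr by auto
  have "\<iota> \<triangleleft> (f0 \<odot> h0) = id2 (f0 \<odot> h0)"
    using whisker_right_comp[OF \<iota>(1), of f0 h0] \<iota>(2) hcomp_id2[of h0 f0] arr x by simp
  then have "\<iota> \<star> \<phi> = \<phi>"
    using hcomp_eq_whiskers(1)[OF \<phi> \<iota>(1)] whisker_left_ide[OF \<phi>] vcomp_id_left[OF \<phi>] ends x
    by simp
  then show ?thesis
    using hcomp_eq_whiskers(2)[OF \<phi> \<iota>(1)] ends x by simp
qed

lemma opcomma_factor:
  assumes "opcomma C p P d0 d1 \<alpha>" "y \<in> Obj C"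
    and "h0 \<in> hom C (trg C p) y" "h1 \<in> hom C (trg C p) y" "\<beta> \<in> cells C (h1 \<odot> p) (h0 \<odot> p)"
  obtains h where "h \<in> hom C P y" "h \<odot> d0 = h0" "h \<odot> d1 = h1" "h \<triangleright> \<alpha> = \<beta>"
proof -
  have "(h0, h1, \<beta>) \<in> (\<lambda>h. (h \<odot> d0, h \<odot> d1, h \<triangleright> \<alpha>)) ` hom C P y"
    using assms unfolding opcomma_def bij_betw_def by auto
  then show thesis using that by auto
qed

lemma opcomma_factor_unique:
  assumes "opcomma C p P d0 d1 \<alpha>" "h \<in> hom C P y" "h' \<in> hom C P y"
    and "h \<odot> d0 = h' \<odot> d0" "h \<odot> d1 = h' \<odot> d1" "h \<triangleright> \<alpha> = h' \<triangleright> \<alpha>"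
  shows "h = h'"
proof -
  have "inj_on (\<lambda>h. (h \<odot> d0, h \<odot> d1, h \<triangleright> \<alpha>)) (hom C P y)"
    using assms(1) obj_hom[OF assms(2)] unfolding opcomma_def bij_betw_def by blast
  then show ?thesis using assms(2-) by (auto dest: inj_onD)
qed

lemma opcomma_factor_ex1:
  assumes "opcomma C p P d0 d1 \<alpha>" "y \<in> Obj C"
    and "h0 \<in> hom C (trg C p) y" "h1 \<in> hom C (trg C p) y" "\<beta> \<in> cells C (h1 \<odot> p) (h0 \<odot> p)"
  shows "\<exists>!h. h \<in> hom C P y \<and> h \<odot> d0 = h0 \<and> h \<odot> d1 = h1 \<and> h \<triangleright> \<alpha> = \<beta>"
  using opcomma_factor[OF assms] opcomma_factor_unique[OF assms(1)] by metis

lemma opcomma_cell_factor: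
  assumes "opcomma C p P d0 d1 \<alpha>" "h \<in> hom C P y" "h' \<in> hom C P y"
    and "\<xi>0 \<in> cells C (h \<odot> d0) (h' \<odot> d0)" "\<xi>1 \<in> cells C (h \<odot> d1) (h' \<odot> d1)"
    and "(\<xi>0 \<triangleleft> p) \<bullet> (h \<triangleright> \<alpha>) = (h' \<triangleright> \<alpha>) \<bullet> (\<xi>1 \<triangleleft> p)"
  obtains \<xi> where "\<xi> \<in> cells C h h'" "\<xi> \<triangleleft> d0 = \<xi>0" "\<xi> \<triangleleft> d1 = \<xi>1"
proof -
  have "(\<xi>0, \<xi>1) \<in> (\<lambda>\<xi>. (\<xi> \<triangleleft> d0, \<xi> \<triangleleft> d1)) ` cells C h h'"
    using assms obj_hom[OF assms(2)] unfolding opcomma_def bij_betw_def by blast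
  then show thesis using that by auto
qed

lemma pushout2_factor:
  assumes "pushout2 C f0 f1 Q q0 q1" "y \<in> Obj C"
    and "k0 \<in> hom C (trg C f0) y" "k1 \<in> hom C (trg C f1) y" "k0 \<odot> f0 = k1 \<odot> f1"
  obtains k where "k \<in> hom C Q y" "k \<odot> q0 = k0" "k \<odot> q1 = k1"
proof -
  have "(k0, k1) \<in> (\<lambda>k. (k \<odot> q0, k \<odot> q1)) ` hom C Q y"
    using assms unfolding pushout2_def bij_betw_def by auto
  then show thesis using that by auto
qed

lemma pushout2_cell_factor:
  assumes "pushout2 C f0 f1 Q q0 q1" "k \<in> hom C Q y" "k' \<in> hom C Q y"
    and "\<xi>0 \<in> cells C (k \<odot> q0) (k' \<odot> q0)" "\<xi>1 \<in> cells C (k \<odot> q1) (k' \<odot> q1)"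
    and "\<xi>0 \<triangleleft> f0 = \<xi>1 \<triangleleft> f1"
  obtains \<xi> where "\<xi> \<in> cells C k k'" "\<xi> \<triangleleft> q0 = \<xi>0" "\<xi> \<triangleleft> q1 = \<xi>1"
proof -
  have "(\<xi>0, \<xi>1) \<in> (\<lambda>\<xi>. (\<xi> \<triangleleft> q0, \<xi> \<triangleleft> q1)) ` cells C k k'"
    using assms obj_hom[OF assms(2)] unfolding pushout2_def bij_betw_def by blast
  then show thesis using that by auto
qed

lemma ran_factor:
  assumes "ran C g f r \<gamma>" "k \<in> hom C (trg C g) (trg C f)" "\<phi> \<in> cells C (k \<odot> g) f"
  obtains \<beta> where "\<beta> \<in> cells C k r" "\<gamma> \<bullet> (\<beta> \<triangleleft> g) = \<phi>"
proof -
  have "\<phi> \<in> (\<lambda>\<beta>. \<gamma> \<bullet> (\<beta> \<triangleleft> g)) ` cells C k r"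
    using assms unfolding ran_def bij_betw_def by auto
  then show thesis using that by auto
qed

lemma ran_factor_unique:
  assumes "ran C g f r \<gamma>" "k \<in> hom C (trg C g) (trg C f)" "\<beta> \<in> cells C k r" "\<beta>' \<in> cells C k r"
    and "\<gamma> \<bullet> (\<beta> \<triangleleft> g) = \<gamma> \<bullet> (\<beta>' \<triangleleft> g)"
  shows "\<beta> = \<beta>'"
proof -
  have "inj_on (\<lambda>\<beta>. \<gamma> \<bullet> (\<beta> \<triangleleft> g)) (cells C k r)"
    using assms unfolding ran_def bij_betw_def by blast
  then show ?thesis using assms by (auto dest: inj_onD)
qed

lemma ran_factor_the:
  assumes "ran C g f r \<gamma>" "k \<in> hom C (trg C g) (trg C f)" "\<beta> \<in> cells C k r" "\<gamma> \<bullet> (\<beta> \<triangleleft> g) = \<phi>"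
  shows "(THE \<beta>. \<beta> \<in> cells C k r \<and> \<gamma> \<bullet> (\<beta> \<triangleleft> g) = \<phi>) = \<beta>"
  using assms ran_factor_unique[OF assms(1,2)] by (intro the_equality) auto

end

locale cokernel = two_category C for C :: "('o,'a,'c) tcat" +
  fixes p :: 'a and e b P :: 'o and d0 d1 :: 'a and \<alpha> :: 'c and P3 :: 'o and D0 D2 :: 'a
  assumes p_hom: "p \<in> hom C e b"
    and cokernel_diagram: "cokernel_diagram C p P d0 d1 \<alpha> P3 D0 D2"
begin

lemma opcomma: "opcomma C p P d0 d1 \<alpha>"
  and pushout: "pushout2 C d0 d1 P3 D2 D0"
  using cokernel_diagram unfolding cokernel_diagram_def by auto

lemma arr_simps [simp]:
  "p \<in> Arr C" "src C p = e" "trg C p = b"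
  "d0 \<in> Arr C" "src C d0 = b" "trg C d0 = P"
  "d1 \<in> Arr C" "src C d1 = b" "trg C d1 = P"
  "D0 \<in> Arr C" "src C D0 = P" "trg C D0 = P3"
  "D2 \<in> Arr C" "src C D2 = P" "trg C D2 = P3"
  "b \<in> Obj C" "e \<in> Obj C" "P \<in> Obj C" "P3 \<in> Obj C"
  using p_hom opcomma pushout obj_hom[OF p_hom]
  unfolding opcomma_def pushout2_def by (auto simp: hom_iff)

lemma alpha_cells: "\<alpha> \<in> cells C (d1 \<odot> p) (d0 \<odot> p)"
  using opcomma unfolding opcomma_def by blast

lemma pushout_square [simp]: "D2 \<odot> d0 = D0 \<odot> d1"
  and pushout_square' [simp]: "f \<in> Arr C \<Longrightarrow> trg C f = b \<Longrightarrow> D2 \<odot> d0 \<odot> f = D0 \<odot> d1 \<odot> f"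
  using pushout comp_assoc[of f d0 D2] comp_assoc[of f d1 D0] unfolding pushout2_def by auto

abbreviation s0 where "s0 \<equiv> cokS0 C p P d0 d1 \<alpha>"

lemma s0_spec: "s0 \<in> hom C P b" "s0 \<odot> d0 = ide C b" "s0 \<odot> d1 = ide C b" "s0 \<triangleright> \<alpha> = id2 p"
proof -
  have "\<exists>!h. h \<in> hom C P (trg C p) \<and> h \<odot> d0 = ide C (trg C p) \<and> h \<odot> d1 = ide C (trg C p) \<and>
      h \<triangleright> \<alpha> = id2 p"
    using opcomma_factor_ex1[OF opcomma, of b "ide C b" "ide C b" "id2 p"] id2_cells[of p]
    by (simp add: hom_iff)
  from theI'[OF this] show "s0 \<in> hom C P b" "s0 \<odot> d0 = ide C b" "s0 \<odot> d1 = ide C b" "s0 \<triangleright> \<alpha> = id2 p"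
    unfolding cokS0_def by auto
qed

abbreviation D1 where "D1 \<equiv> cokD1 C p P d0 d1 \<alpha> P3 D0 D2"

lemma D1_spec: "D1 \<in> hom C P P3" "D1 \<odot> d1 = D2 \<odot> d1" "D1 \<odot> d0 = D0 \<odot> d0"
  "D1 \<triangleright> \<alpha> = (D0 \<triangleright> \<alpha>) \<bullet> (D2 \<triangleright> \<alpha>)"
proof -
  have "D2 \<triangleright> \<alpha> \<in> cells C (D2 \<odot> d1 \<odot> p) (D0 \<odot> d1 \<odot> p)"
    and "D0 \<triangleright> \<alpha> \<in> cells C (D0 \<odot> d1 \<odot> p) (D0 \<odot> d0 \<odot> p)"
    using whisker_left_cells[OF alpha_cells, of D2] whisker_left_cells[OF alpha_cells, of D0] by simp_all
  from vcomp_cells[OF this]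
  have "(D0 \<triangleright> \<alpha>) \<bullet> (D2 \<triangleright> \<alpha>) \<in> cells C ((D2 \<odot> d1) \<odot> p) ((D0 \<odot> d0) \<odot> p)"
    by simp
  then have "\<exists>!h. h \<in> hom C P P3 \<and> h \<odot> d1 = D2 \<odot> d1 \<and> h \<odot> d0 = D0 \<odot> d0 \<and>
      h \<triangleright> \<alpha> = (D0 \<triangleright> \<alpha>) \<bullet> (D2 \<triangleright> \<alpha>)"
    using opcomma_factor_ex1[OF opcomma, of P3 "D0 \<odot> d0" "D2 \<odot> d1" "(D0 \<triangleright> \<alpha>) \<bullet> (D2 \<triangleright> \<alpha>)"]
    by (simp add: hom_iff conj_ac)
  from theI'[OF this] show "D1 \<in> hom C P P3" "D1 \<odot> d1 = D2 \<odot> d1" "D1 \<odot> d0 = D0 \<odot> d0"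
    "D1 \<triangleright> \<alpha> = (D0 \<triangleright> \<alpha>) \<bullet> (D2 \<triangleright> \<alpha>)"
    unfolding cokD1_def by auto
qed

lemma s0_simps [simp]: "s0 \<in> Arr C" "src C s0 = P" "trg C s0 = b"
  and D1_simps [simp]: "D1 \<in> Arr C" "src C D1 = P" "trg C D1 = P3"
  using s0_spec(1) D1_spec(1) by (auto simp: hom_iff)


lemma s0_comp [simp]: "s0 \<odot> d0 = ide C b" "s0 \<odot> d1 = ide C b"
  "f \<in> Arr C \<Longrightarrow> trg C f = b \<Longrightarrow> s0 \<odot> d0 \<odot> f = f"
  "f \<in> Arr C \<Longrightarrow> trg C f = b \<Longrightarrow> s0 \<odot> d1 \<odot> f = f"
  using s0_spec(2,3) comp_assoc[of f d0 s0] comp_assoc[of f d1 s0] by auto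

lemma D1_comp [simp]: "D1 \<odot> d0 = D0 \<odot> d0" "D1 \<odot> d1 = D2 \<odot> d1"
  "f \<in> Arr C \<Longrightarrow> trg C f = b \<Longrightarrow> D1 \<odot> d0 \<odot> f = D0 \<odot> d0 \<odot> f"
  "f \<in> Arr C \<Longrightarrow> trg C f = b \<Longrightarrow> D1 \<odot> d1 \<odot> f = D2 \<odot> d1 \<odot> f"
  using D1_spec(2,3) comp_assoc[of f d0 D1] comp_assoc[of f d1 D1] comp_assoc[of f d0 D0]
    comp_assoc[of f d1 D2] by auto

end

section \<open>Descent data versus algebras for the codensity monad\<close>

text \<open>\<open>\<sigma>\<close> is \<open>\<alpha>\<close> factored through the right Kan extension \<open>(d0 t, d0 \<gamma>)\<close> of \<open>d0 p\<close> along \<open>p\<close>.\<close>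

locale codensity_comparison = cokernel C p e b P d0 d1 \<alpha> P3 D0 D2
  for C :: "('o,'a,'c) tcat" and p e b P d0 d1 \<alpha> P3 D0 D2 +
  fixes t :: 'a and \<gamma> \<sigma> :: 'c
  assumes ran: "ran C p p t \<gamma>"
    and sigma_cells: "\<sigma> \<in> cells C d1 (d0 \<odot> t)"
    and alpha_factors: "(d0 \<triangleright> \<gamma>) \<bullet> (\<sigma> \<triangleleft> p) = \<alpha>"
begin

abbreviation \<eta> where "\<eta> \<equiv> cod_unit C p t \<gamma>"
abbreviation \<mu> where "\<mu> \<equiv> cod_mult C p t \<gamma>"

lemma t_simps [simp]: "t \<in> Arr C" "src C t = b" "trg C t = b"
  and gamma_cells: "\<gamma> \<in> cells C (t \<odot> p) p"
  using ran unfolding ran_def by (auto simp: hom_iff)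

definition r where "r = (SOME h. h \<in> hom C P b \<and> h \<odot> d0 = ide C b \<and> h \<odot> d1 = t \<and> h \<triangleright> \<alpha> = \<gamma>)"

lemma r_spec: "r \<in> hom C P b" "r \<odot> d0 = ide C b" "r \<odot> d1 = t" "r \<triangleright> \<alpha> = \<gamma>"
proof -
  have "\<gamma> \<in> cells C (t \<odot> p) (ide C b \<odot> p)" using gamma_cells by simp
  then have "\<exists>h. h \<in> hom C P b \<and> h \<odot> d0 = ide C b \<and> h \<odot> d1 = t \<and> h \<triangleright> \<alpha> = \<gamma>"
    using opcomma_factor[OF opcomma, of b "ide C b" t] by (auto simp: hom_iff)
  from someI_ex[OF this] show "r \<in> hom C P b" "r \<odot> d0 = ide C b" "r \<odot> d1 = t" "r \<triangleright> \<alpha> = \<gamma>"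
    unfolding r_def[symmetric] by auto
qed

lemma r_simps [simp]: "r \<in> Arr C" "src C r = P" "trg C r = b"
  using r_spec(1) by (auto simp: hom_iff)

lemma r_comp [simp]: "r \<odot> d0 = ide C b" "r \<odot> d1 = t"
  "f \<in> Arr C \<Longrightarrow> trg C f = b \<Longrightarrow> r \<odot> d0 \<odot> f = f"
  "f \<in> Arr C \<Longrightarrow> trg C f = b \<Longrightarrow> r \<odot> d1 \<odot> f = t \<odot> f"
  using r_spec(2,3) comp_assoc[of f d0 r] comp_assoc[of f d1 r] by auto

definition R where "R = (SOME k. k \<in> hom C P3 b \<and> k \<odot> D2 = t \<odot> r \<and> k \<odot> D0 = r)"

lemma R_spec: "R \<in> hom C P3 b" "R \<odot> D2 = t \<odot> r" "R \<odot> D0 = r"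
proof -
  have "\<exists>k. k \<in> hom C P3 b \<and> k \<odot> D2 = t \<odot> r \<and> k \<odot> D0 = r"
    using pushout2_factor[OF pushout, of b "t \<odot> r" r] by (auto simp: hom_iff)
  from someI_ex[OF this] show "R \<in> hom C P3 b" "R \<odot> D2 = t \<odot> r" "R \<odot> D0 = r"
    unfolding R_def[symmetric] by auto
qed

lemma R_simps [simp]: "R \<in> Arr C" "src C R = P3" "trg C R = b"
  using R_spec(1) by (auto simp: hom_iff)

lemma R_comp [simp]: "R \<odot> D2 = t \<odot> r" "R \<odot> D0 = r"
  "f \<in> Arr C \<Longrightarrow> trg C f = P \<Longrightarrow> R \<odot> D2 \<odot> f = t \<odot> r \<odot> f"
  "f \<in> Arr C \<Longrightarrow> trg C f = P \<Longrightarrow> R \<odot> D0 \<odot> f = r \<odot> f"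
  using R_spec(2,3) comp_assoc[of f D2 R] comp_assoc[of f D0 R] by auto

lemma whisker_sigma_cells:
  "k \<in> Arr C \<Longrightarrow> src C k = P \<Longrightarrow> k \<odot> d0 = ide C b \<Longrightarrow> k \<triangleright> \<sigma> \<in> cells C (k \<odot> d1) t"
  using whisker_left_cells[OF sigma_cells, of k] comp_assoc[of t d0 k] by simp

lemma sigma_whisker_cells:
  "f \<in> Arr C \<Longrightarrow> trg C f = b \<Longrightarrow> \<sigma> \<triangleleft> f \<in> cells C (d1 \<odot> f) (d0 \<odot> t \<odot> f)"
  using whisker_right_cells[OF sigma_cells, of f] by simp

lemma d0_whisker_cells:
  "\<theta> \<in> cells C f f' \<Longrightarrow> trg C f = b \<Longrightarrow> d0 \<triangleright> \<theta> \<in> cells C (d0 \<odot> f) (d0 \<odot> f')"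
  using whisker_left_cells[of \<theta> f f' d0] by simp

lemma whisker_alpha:
  assumes k: "k \<in> Arr C" "src C k = P" "k \<odot> d0 = ide C b"
  shows "k \<triangleright> \<alpha> = \<gamma> \<bullet> ((k \<triangleright> \<sigma>) \<triangleleft> p)"
proof -
  have "k \<triangleright> \<alpha> = (k \<triangleright> d0 \<triangleright> \<gamma>) \<bullet> (k \<triangleright> \<sigma> \<triangleleft> p)"
    using whisker_left_vcomp[OF sigma_whisker_cells d0_whisker_cells[OF gamma_cells], of k]
      alpha_factors k by simp
  also have "k \<triangleright> d0 \<triangleright> \<gamma> = \<gamma>"
    using whisker_left_comp[OF gamma_cells, of d0 k] whisker_left_ide[OF gamma_cells] k by simp
  also have "k \<triangleright> \<sigma> \<triangleleft> p = (k \<triangleright> \<sigma>) \<triangleleft> p"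
    using whisker_left_right[OF sigma_cells, of p k] k by simp
  finally show ?thesis .
qed

lemma r_whisker_sigma: "r \<triangleright> \<sigma> = id2 t"
proof (rule ran_factor_unique[OF ran])
  show "t \<in> hom C (trg C p) (trg C p)" by (simp add: hom_iff)
  show "r \<triangleright> \<sigma> \<in> cells C t t" "id2 t \<in> cells C t t"
    using whisker_sigma_cells[of r] id2_cells[of t] by simp_all
  show "\<gamma> \<bullet> ((r \<triangleright> \<sigma>) \<triangleleft> p) = \<gamma> \<bullet> (id2 t \<triangleleft> p)"
    using whisker_alpha[of r] r_spec(4) hcomp_id2[of p t] vcomp_id_right[OF gamma_cells] by simp
qed

lemma cod_unit_eq: "\<eta> = s0 \<triangleright> \<sigma>"
  unfolding cod_unit_def
  using ran_factor_the[OF ran, of "ide C b" "s0 \<triangleright> \<sigma>" "id2 p"]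
    whisker_sigma_cells[of s0] whisker_alpha[of s0] s0_spec(4) by (simp add: hom_iff)

lemma RD1_whisker_alpha: "(R \<odot> D1) \<triangleright> \<alpha> = \<gamma> \<bullet> (t \<triangleright> \<gamma>)"
proof -
  have c2: "D2 \<triangleright> \<alpha> \<in> cells C (D2 \<odot> d1 \<odot> p) (D0 \<odot> d1 \<odot> p)"
    and c0: "D0 \<triangleright> \<alpha> \<in> cells C (D0 \<odot> d1 \<odot> p) (D0 \<odot> d0 \<odot> p)"
    using whisker_left_cells[OF alpha_cells, of D2] whisker_left_cells[OF alpha_cells, of D0] by simp_all
  have "(R \<odot> D1) \<triangleright> \<alpha> = R \<triangleright> D1 \<triangleright> \<alpha>" using whisker_left_comp[OF alpha_cells, of D1 R] by simp
  also have "\<dots> = (R \<triangleright> D0 \<triangleright> \<alpha>) \<bullet> (R \<triangleright> D2 \<triangleright> \<alpha>)"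
    using D1_spec(4) whisker_left_vcomp[OF c2 c0, of R] by simp
  also have "R \<triangleright> D0 \<triangleright> \<alpha> = \<gamma>" using whisker_left_comp[OF alpha_cells, of D0 R] r_spec(4) by simp
  also have "R \<triangleright> D2 \<triangleright> \<alpha> = t \<triangleright> \<gamma>"
    using whisker_left_comp[OF alpha_cells, of D2 R] whisker_left_comp[OF alpha_cells, of r t] r_spec(4) by simp
  finally show ?thesis .
qed

lemma cod_mult_eq: "\<mu> = (R \<odot> D1) \<triangleright> \<sigma>"
  unfolding cod_mult_def
  using ran_factor_the[OF ran, of "t \<odot> t" "(R \<odot> D1) \<triangleright> \<sigma>" "\<gamma> \<bullet> (t \<triangleright> \<gamma>)"]
    whisker_sigma_cells[of "R \<odot> D1"] whisker_alpha[of "R \<odot> D1"] RD1_whisker_alpha by (simp add: hom_iff)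

text \<open>Because \<open>\<iota> \<triangleleft> d0\<close> is an identity, every cell \<open>d1 h1 \<Rightarrow> d0 h0\<close> can be recovered from its
  whiskering by \<open>r\<close>; \<open>\<iota>3\<close> plays the same role for \<open>R\<close>.\<close>

definition \<iota> where
  "\<iota> = (SOME \<xi>. \<xi> \<in> cells C (ide C P) (d0 \<odot> r) \<and> \<xi> \<triangleleft> d0 = id2 d0 \<and> \<xi> \<triangleleft> d1 = \<sigma>)"

lemma \<iota>_spec: "\<iota> \<in> cells C (ide C P) (d0 \<odot> r)" "\<iota> \<triangleleft> d0 = id2 d0" "\<iota> \<triangleleft> d1 = \<sigma>"
proof -
  have c0: "id2 d0 \<in> cells C (ide C P \<odot> d0) ((d0 \<odot> r) \<odot> d0)"
    and c1: "\<sigma> \<in> cells C (ide C P \<odot> d1) ((d0 \<odot> r) \<odot> d1)"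
    using id2_cells[of d0] sigma_cells by simp_all
  have "(id2 d0 \<triangleleft> p) \<bullet> (ide C P \<triangleright> \<alpha>) = \<alpha>"
    using hcomp_id2[of p d0] whisker_left_ide[OF alpha_cells] vcomp_id_left[OF alpha_cells] by simp
  moreover have "((d0 \<odot> r) \<triangleright> \<alpha>) \<bullet> (\<sigma> \<triangleleft> p) = \<alpha>"
    using whisker_left_comp[OF alpha_cells, of r d0] r_spec(4) alpha_factors by simp
  ultimately have "\<exists>\<xi>. \<xi> \<in> cells C (ide C P) (d0 \<odot> r) \<and> \<xi> \<triangleleft> d0 = id2 d0 \<and> \<xi> \<triangleleft> d1 = \<sigma>"
    using opcomma_cell_factor[OF opcomma _ _ c0 c1, of P] by (auto simp: hom_iff)
  from someI_ex[OF this] show "\<iota> \<in> cells C (ide C P) (d0 \<odot> r)" "\<iota> \<triangleleft> d0 = id2 d0" "\<iota> \<triangleleft> d1 = \<sigma>"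
    unfolding \<iota>_def[symmetric] by auto
qed

lemma descent_cell_eq:
  assumes h: "h0 \<in> Arr C" "h1 \<in> Arr C" "trg C h0 = b" "trg C h1 = b"
    and \<phi>: "\<phi> \<in> cells C (d1 \<odot> h1) (d0 \<odot> h0)"
  shows "\<phi> = (d0 \<triangleright> r \<triangleright> \<phi>) \<bullet> (\<sigma> \<triangleleft> h1)"
proof -
  have "\<phi> = ((d0 \<odot> r) \<triangleright> \<phi>) \<bullet> (\<iota> \<triangleleft> (d1 \<odot> h1))"
    using cell_eq_through_unit[OF \<iota>_spec(1,2) \<phi>] h by simp
  also have "(d0 \<odot> r) \<triangleright> \<phi> = d0 \<triangleright> r \<triangleright> \<phi>"
    using whisker_left_comp[OF \<phi>, of r d0] h by simp
  also have "\<iota> \<triangleleft> (d1 \<odot> h1) = \<sigma> \<triangleleft> h1"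
    using whisker_right_comp[OF \<iota>_spec(1), of d1 h1] \<iota>_spec(3) h by simp
  finally show ?thesis .
qed

lemma r_whisker_inj:
  "h0 \<in> Arr C \<Longrightarrow> h1 \<in> Arr C \<Longrightarrow> trg C h0 = b \<Longrightarrow> trg C h1 = b \<Longrightarrow>
   \<phi> \<in> cells C (d1 \<odot> h1) (d0 \<odot> h0) \<Longrightarrow> \<phi>' \<in> cells C (d1 \<odot> h1) (d0 \<odot> h0) \<Longrightarrow>
   r \<triangleright> \<phi> = r \<triangleright> \<phi>' \<Longrightarrow> \<phi> = \<phi>'"
  using descent_cell_eq by metis

definition \<iota>3 where
  "\<iota>3 = (SOME \<xi>. \<xi> \<in> cells C (ide C P3) (D0 \<odot> d0 \<odot> R) \<and>
     \<xi> \<triangleleft> D2 = ((D0 \<triangleright> \<sigma>) \<triangleleft> r) \<bullet> (D2 \<triangleright> \<iota>) \<and> \<xi> \<triangleleft> D0 = D0 \<triangleright> \<iota>)"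

lemma \<iota>3_spec: "\<iota>3 \<in> cells C (ide C P3) (D0 \<odot> d0 \<odot> R)" "\<iota>3 \<triangleleft> D0 = D0 \<triangleright> \<iota>"
proof -
  have a1: "D2 \<triangleright> \<iota> \<in> cells C D2 (D0 \<odot> d1 \<odot> r)"
    using whisker_left_cells[OF \<iota>_spec(1), of D2] by simp
  have a2: "D0 \<triangleright> \<sigma> \<in> cells C (D0 \<odot> d1) (D0 \<odot> d0 \<odot> t)"
    using whisker_left_cells[OF sigma_cells, of D0] by simp
  have a3: "(D0 \<triangleright> \<sigma>) \<triangleleft> r \<in> cells C (D0 \<odot> d1 \<odot> r) (D0 \<odot> d0 \<odot> t \<odot> r)"
    using whisker_right_cells[OF a2, of r] by simp
  have c0: "((D0 \<triangleright> \<sigma>) \<triangleleft> r) \<bullet> (D2 \<triangleright> \<iota>) \<in> cells C (ide C P3 \<odot> D2) ((D0 \<odot> d0 \<odot> R) \<odot> D2)"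
    using vcomp_cells[OF a1 a3] by simp
  have c1: "D0 \<triangleright> \<iota> \<in> cells C (ide C P3 \<odot> D0) ((D0 \<odot> d0 \<odot> R) \<odot> D0)"
    using whisker_left_cells[OF \<iota>_spec(1), of D0] by simp
  have "(((D0 \<triangleright> \<sigma>) \<triangleleft> r) \<bullet> (D2 \<triangleright> \<iota>)) \<triangleleft> d0 = ((D0 \<triangleright> \<sigma>) \<triangleleft> (r \<odot> d0)) \<bullet> (D2 \<triangleright> \<iota> \<triangleleft> d0)"
    using whisker_right_vcomp[OF a1 a3, of d0] whisker_right_comp[OF a2, of r d0]
      whisker_left_right[OF \<iota>_spec(1), of d0 D2] by simp
  also have "\<dots> = D0 \<triangleright> \<sigma>"
    using whisker_right_ide[OF a2] \<iota>_spec(2) hcomp_id2[of d0 D2] vcomp_id_right[OF a2] by simp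
  also have "\<dots> = (D0 \<triangleright> \<iota>) \<triangleleft> d1"
    using whisker_left_right[OF \<iota>_spec(1), of d1 D0] \<iota>_spec(3) by simp
  finally have "\<exists>\<xi>. \<xi> \<in> cells C (ide C P3) (D0 \<odot> d0 \<odot> R) \<and>
     \<xi> \<triangleleft> D2 = ((D0 \<triangleright> \<sigma>) \<triangleleft> r) \<bullet> (D2 \<triangleright> \<iota>) \<and> \<xi> \<triangleleft> D0 = D0 \<triangleright> \<iota>"
    using pushout2_cell_factor[OF pushout _ _ c0 c1, of P3] by (auto simp: hom_iff)
  from someI_ex[OF this] show "\<iota>3 \<in> cells C (ide C P3) (D0 \<odot> d0 \<odot> R)" "\<iota>3 \<triangleleft> D0 = D0 \<triangleright> \<iota>"
    unfolding \<iota>3_def[symmetric] by auto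
qed

lemma R_whisker_inj:
  assumes h: "h0 \<in> Arr C" "h1 \<in> Arr C" "trg C h0 = b" "trg C h1 = b"
    and \<phi>: "\<phi> \<in> cells C (D2 \<odot> d1 \<odot> h1) (D0 \<odot> d0 \<odot> h0)" "\<phi>' \<in> cells C (D2 \<odot> d1 \<odot> h1) (D0 \<odot> d0 \<odot> h0)"
    and eq: "R \<triangleright> \<phi> = R \<triangleright> \<phi>'"
  shows "\<phi> = \<phi>'"
proof -
  have "\<iota>3 \<triangleleft> (D0 \<odot> d0) = D0 \<triangleright> (\<iota> \<triangleleft> d0)"
    using whisker_right_comp[OF \<iota>3_spec(1), of D0 d0, symmetric] \<iota>3_spec(2) whisker_left_right[OF \<iota>_spec(1), of d0 D0]
    by simp
  then have unit: "\<iota>3 \<triangleleft> (D0 \<odot> d0) = id2 (D0 \<odot> d0)"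
    using \<iota>_spec(2) hcomp_id2[of d0 D0] by simp
  have "\<psi> = ((D0 \<odot> d0 \<odot> R) \<triangleright> \<psi>) \<bullet> (\<iota>3 \<triangleleft> ((D2 \<odot> d1) \<odot> h1))"
    if "\<psi> \<in> cells C (D2 \<odot> d1 \<odot> h1) (D0 \<odot> d0 \<odot> h0)" for \<psi>
  proof -
    have "\<psi> \<in> cells C ((D2 \<odot> d1) \<odot> h1) ((D0 \<odot> d0) \<odot> h0)" using that h by simp
    from cell_eq_through_unit[OF \<iota>3_spec(1) unit this] show ?thesis using h by simp
  qed
  moreover have "(D0 \<odot> d0 \<odot> R) \<triangleright> \<phi> = (D0 \<odot> d0 \<odot> R) \<triangleright> \<phi>'"
    using whisker_left_comp[OF \<phi>(1), of R "D0 \<odot> d0"] whisker_left_comp[OF \<phi>(2), of R "D0 \<odot> d0"] eq h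
    by simp
  ultimately show ?thesis using \<phi> by metis
qed

definition to_descent :: "'a \<Rightarrow> 'c \<Rightarrow> 'c" where
  "to_descent h \<theta> = (d0 \<triangleright> \<theta>) \<bullet> (\<sigma> \<triangleleft> h)"

lemma to_descent_cells:
  "h \<in> Arr C \<Longrightarrow> trg C h = b \<Longrightarrow> \<theta> \<in> cells C (t \<odot> h) h \<Longrightarrow> to_descent h \<theta> \<in> cells C (d1 \<odot> h) (d0 \<odot> h)"
  unfolding to_descent_def using vcomp_cells[OF sigma_whisker_cells d0_whisker_cells] by simp

lemma r_whisker_cells:
  "h \<in> Arr C \<Longrightarrow> trg C h = b \<Longrightarrow> \<beta> \<in> cells C (d1 \<odot> h) (d0 \<odot> h) \<Longrightarrow> r \<triangleright> \<beta> \<in> cells C (t \<odot> h) h"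
  using whisker_left_cells[of \<beta> "d1 \<odot> h" "d0 \<odot> h" r] by simp

lemma whisker_to_descent:
  assumes h: "h \<in> Arr C" "trg C h = b" and \<theta>: "\<theta> \<in> cells C (t \<odot> h) h"
    and k: "k \<in> Arr C" "src C k = P" "k \<odot> d0 = ide C b"
  shows "k \<triangleright> to_descent h \<theta> = \<theta> \<bullet> ((k \<triangleright> \<sigma>) \<triangleleft> h)"
proof -
  have "k \<triangleright> to_descent h \<theta> = (k \<triangleright> d0 \<triangleright> \<theta>) \<bullet> (k \<triangleright> \<sigma> \<triangleleft> h)"
    unfolding to_descent_def using whisker_left_vcomp[OF sigma_whisker_cells d0_whisker_cells[OF \<theta>]] h k
    by simp
  also have "k \<triangleright> d0 \<triangleright> \<theta> = \<theta>"
    using whisker_left_comp[OF \<theta>, of d0 k] whisker_left_ide[OF \<theta>] h k by simp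
  also have "k \<triangleright> \<sigma> \<triangleleft> h = (k \<triangleright> \<sigma>) \<triangleleft> h"
    using whisker_left_right[OF sigma_cells, of h k] h k by simp
  finally show ?thesis .
qed

lemma r_whisker_to_descent:
  assumes "h \<in> Arr C" "trg C h = b" "\<theta> \<in> cells C (t \<odot> h) h"
  shows "r \<triangleright> to_descent h \<theta> = \<theta>"
  using whisker_to_descent[OF assms, of r] r_whisker_sigma hcomp_id2[of h t] vcomp_id_right[OF assms(3)] assms
  by simp

lemma to_descent_r_whisker:
  "h \<in> Arr C \<Longrightarrow> trg C h = b \<Longrightarrow> \<beta> \<in> cells C (d1 \<odot> h) (d0 \<odot> h) \<Longrightarrow> to_descent h (r \<triangleright> \<beta>) = \<beta>"
  using descent_cell_eq[of h h \<beta>] unfolding to_descent_def by simp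

lemma normal_iff_unit_law:
  assumes h: "h \<in> Arr C" "trg C h = b" and \<beta>: "\<beta> \<in> cells C (d1 \<odot> h) (d0 \<odot> h)"
  shows "s0 \<triangleright> \<beta> = id2 h \<longleftrightarrow> (r \<triangleright> \<beta>) \<bullet> (\<eta> \<triangleleft> h) = id2 h"
proof -
  have "s0 \<triangleright> \<beta> = s0 \<triangleright> to_descent h (r \<triangleright> \<beta>)" using to_descent_r_whisker[OF h \<beta>] by simp
  also have "\<dots> = (r \<triangleright> \<beta>) \<bullet> (\<eta> \<triangleleft> h)"
    using whisker_to_descent[OF h r_whisker_cells[OF h \<beta>], of s0] cod_unit_eq by simp
  finally show ?thesis by simp
qed

lemma cocycle_iff_assoc_law:
  assumes h: "h \<in> Arr C" "trg C h = b" and \<beta>: "\<beta> \<in> cells C (d1 \<odot> h) (d0 \<odot> h)"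
  shows "(D0 \<triangleright> \<beta>) \<bullet> (D2 \<triangleright> \<beta>) = D1 \<triangleright> \<beta> \<longleftrightarrow>
    (r \<triangleright> \<beta>) \<bullet> (t \<triangleright> r \<triangleright> \<beta>) = (r \<triangleright> \<beta>) \<bullet> (\<mu> \<triangleleft> h)"
proof -
  have c2: "D2 \<triangleright> \<beta> \<in> cells C (D2 \<odot> d1 \<odot> h) (D0 \<odot> d1 \<odot> h)"
    and c0: "D0 \<triangleright> \<beta> \<in> cells C (D0 \<odot> d1 \<odot> h) (D0 \<odot> d0 \<odot> h)"
    and c1: "D1 \<triangleright> \<beta> \<in> cells C (D2 \<odot> d1 \<odot> h) (D0 \<odot> d0 \<odot> h)"
    using whisker_left_cells[OF \<beta>, of D2] whisker_left_cells[OF \<beta>, of D0]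
      whisker_left_cells[OF \<beta>, of D1] h by simp_all
  have "R \<triangleright> ((D0 \<triangleright> \<beta>) \<bullet> (D2 \<triangleright> \<beta>)) = (R \<triangleright> D0 \<triangleright> \<beta>) \<bullet> (R \<triangleright> D2 \<triangleright> \<beta>)"
    using whisker_left_vcomp[OF c2 c0, of R] h by simp
  also have "\<dots> = (r \<triangleright> \<beta>) \<bullet> (t \<triangleright> r \<triangleright> \<beta>)"
    using whisker_left_comp[OF \<beta>, of D0 R] whisker_left_comp[OF \<beta>, of D2 R]
      whisker_left_comp[OF \<beta>, of r t] h by simp
  finally have lhs: "R \<triangleright> ((D0 \<triangleright> \<beta>) \<bullet> (D2 \<triangleright> \<beta>)) = (r \<triangleright> \<beta>) \<bullet> (t \<triangleright> r \<triangleright> \<beta>)" .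
  have "R \<triangleright> D1 \<triangleright> \<beta> = (R \<odot> D1) \<triangleright> to_descent h (r \<triangleright> \<beta>)"
    using whisker_left_comp[OF \<beta>, of D1 R] to_descent_r_whisker[OF h \<beta>] h by simp
  also have "\<dots> = (r \<triangleright> \<beta>) \<bullet> (\<mu> \<triangleleft> h)"
    using whisker_to_descent[OF h r_whisker_cells[OF h \<beta>], of "R \<odot> D1"] cod_mult_eq by simp
  finally have rhs: "R \<triangleright> D1 \<triangleright> \<beta> = (r \<triangleright> \<beta>) \<bullet> (\<mu> \<triangleleft> h)" .
  show ?thesis
    using R_whisker_inj[OF h(1,1,2,2) vcomp_cells[OF c2 c0] c1] lhs rhs by metis
qed

lemma desc_mor_eq:
  assumes h: "h1 \<in> Arr C" "trg C h1 = b" "h0 \<in> Arr C" "trg C h0 = b"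
    and \<beta>: "\<beta>1 \<in> cells C (d1 \<odot> h1) (d0 \<odot> h1)" "\<beta>0 \<in> cells C (d1 \<odot> h0) (d0 \<odot> h0)"
  shows "desc_mor C d0 d1 h1 \<beta>1 h0 \<beta>0 =
    {\<xi> \<in> cells C h1 h0. \<xi> \<bullet> (r \<triangleright> \<beta>1) = (r \<triangleright> \<beta>0) \<bullet> (t \<triangleright> \<xi>)}"
proof -
  have "\<beta>0 \<bullet> (d1 \<triangleright> \<xi>) = (d0 \<triangleright> \<xi>) \<bullet> \<beta>1 \<longleftrightarrow> \<xi> \<bullet> (r \<triangleright> \<beta>1) = (r \<triangleright> \<beta>0) \<bullet> (t \<triangleright> \<xi>)"
    if \<xi>: "\<xi> \<in> cells C h1 h0" for \<xi>
  proof -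
    have x1: "d1 \<triangleright> \<xi> \<in> cells C (d1 \<odot> h1) (d1 \<odot> h0)"
      and x0: "d0 \<triangleright> \<xi> \<in> cells C (d0 \<odot> h1) (d0 \<odot> h0)"
      using whisker_left_cells[OF \<xi>, of d1] whisker_left_cells[OF \<xi>, of d0] h by simp_all
    have "r \<triangleright> (\<beta>0 \<bullet> (d1 \<triangleright> \<xi>)) = (r \<triangleright> \<beta>0) \<bullet> (t \<triangleright> \<xi>)"
      using whisker_left_vcomp[OF x1 \<beta>(2), of r] whisker_left_comp[OF \<xi>, of d1 r] h by simp
    moreover have "r \<triangleright> ((d0 \<triangleright> \<xi>) \<bullet> \<beta>1) = \<xi> \<bullet> (r \<triangleright> \<beta>1)"
      using whisker_left_vcomp[OF \<beta>(1) x0, of r] whisker_left_comp[OF \<xi>, of d0 r]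
        whisker_left_ide[OF \<xi>] h by simp
    moreover have "src C h1 = src C h0" using cells_arr[OF \<xi>] by simp
    ultimately show ?thesis
      using r_whisker_inj[OF h(3,1,4,2) vcomp_cells[OF x1 \<beta>(2)] vcomp_cells[OF \<beta>(1) x0]] by metis
  qed
  then show ?thesis unfolding desc_mor_def by blast
qed

definition algebras :: "'o \<Rightarrow> ('a \<times> 'c) set" where
  "algebras y = {(h, \<theta>). h \<in> hom C y b \<and> \<theta> \<in> cells C (t \<odot> h) h \<and>
     \<theta> \<bullet> (t \<triangleright> \<theta>) = \<theta> \<bullet> (\<mu> \<triangleleft> h) \<and> \<theta> \<bullet> (\<eta> \<triangleleft> h) = id2 h}"

lemma desc_obj_imp_algebra:
  assumes "(h, \<beta>) \<in> desc_obj C p P d0 d1 \<alpha> P3 D0 D2 y"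
  shows "(h, r \<triangleright> \<beta>) \<in> algebras y"
proof -
  from assms have h: "h \<in> hom C y b" "h \<in> Arr C" "trg C h = b" and \<beta>: "\<beta> \<in> cells C (d1 \<odot> h) (d0 \<odot> h)"
    and "(D0 \<triangleright> \<beta>) \<bullet> (D2 \<triangleright> \<beta>) = D1 \<triangleright> \<beta>" "s0 \<triangleright> \<beta> = id2 h"
    unfolding desc_obj_def by (auto simp: hom_iff)
  then show ?thesis
    unfolding algebras_def
    using r_whisker_cells[OF h(2,3) \<beta>] cocycle_iff_assoc_law[OF h(2,3) \<beta>] normal_iff_unit_law[OF h(2,3) \<beta>]
    by auto
qed

lemma algebra_imp_desc_obj:
  assumes "(h, \<theta>) \<in> algebras y"
  shows "(h, to_descent h \<theta>) \<in> desc_obj C p P d0 d1 \<alpha> P3 D0 D2 y"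
proof -
  from assms have h: "h \<in> hom C y b" "h \<in> Arr C" "trg C h = b" and \<theta>: "\<theta> \<in> cells C (t \<odot> h) h"
    and "\<theta> \<bullet> (t \<triangleright> \<theta>) = \<theta> \<bullet> (\<mu> \<triangleleft> h)" "\<theta> \<bullet> (\<eta> \<triangleleft> h) = id2 h"
    unfolding algebras_def by (auto simp: hom_iff)
  moreover note \<beta> = to_descent_cells[OF h(2,3) \<theta>]
  ultimately show ?thesis
    unfolding desc_obj_def
    using cocycle_iff_assoc_law[OF h(2,3) \<beta>] normal_iff_unit_law[OF h(2,3) \<beta>]
      r_whisker_to_descent[OF h(2,3) \<theta>]
    by auto
qed

lemma desc_obj_algebras_bij:
  shows "bij_betw (\<lambda>(h, \<beta>). (h, r \<triangleright> \<beta>)) (desc_obj C p P d0 d1 \<alpha> P3 D0 D2 y) (algebras y)"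
    and "bij_betw (\<lambda>(h, \<theta>). (h, to_descent h \<theta>)) (algebras y) (desc_obj C p P d0 d1 \<alpha> P3 D0 D2 y)"
proof -
  have "\<forall>(h, \<beta>) \<in> desc_obj C p P d0 d1 \<alpha> P3 D0 D2 y. to_descent h (r \<triangleright> \<beta>) = \<beta>"
    unfolding desc_obj_def using to_descent_r_whisker by (auto simp: hom_iff)
  moreover have "\<forall>(h, \<theta>) \<in> algebras y. r \<triangleright> to_descent h \<theta> = \<theta>"
    unfolding algebras_def using r_whisker_to_descent by (auto simp: hom_iff)
  moreover have "(\<lambda>(h, \<beta>). (h, r \<triangleright> \<beta>)) ` desc_obj C p P d0 d1 \<alpha> P3 D0 D2 y \<subseteq> algebras y"
    using desc_obj_imp_algebra by auto
  moreover have "(\<lambda>(h, \<theta>). (h, to_descent h \<theta>)) ` algebras y \<subseteq> desc_obj C p P d0 d1 \<alpha> P3 D0 D2 y"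
    using algebra_imp_desc_obj by auto
  ultimately show "bij_betw (\<lambda>(h, \<beta>). (h, r \<triangleright> \<beta>)) (desc_obj C p P d0 d1 \<alpha> P3 D0 D2 y) (algebras y)"
    and "bij_betw (\<lambda>(h, \<theta>). (h, to_descent h \<theta>)) (algebras y) (desc_obj C p P d0 d1 \<alpha> P3 D0 D2 y)"
    by (auto intro: bij_betw_byWitness[where f' = "\<lambda>(h, \<theta>). (h, to_descent h \<theta>)"]
        bij_betw_byWitness[where f' = "\<lambda>(h, \<beta>). (h, r \<triangleright> \<beta>)"])
qed

lemma lax_descentD:
  assumes "lax_descent C p P d0 d1 \<alpha> P3 D0 D2 L d \<Psi>"
  shows "L \<in> Obj C" "d \<in> hom C L b" "\<Psi> \<in> cells C (d1 \<odot> d) (d0 \<odot> d)"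
    and "y \<in> Obj C \<Longrightarrow>
      bij_betw (\<lambda>g. (d \<odot> g, \<Psi> \<triangleleft> g)) (hom C y L) (desc_obj C p P d0 d1 \<alpha> P3 D0 D2 y)"
    and "y \<in> Obj C \<Longrightarrow> g \<in> hom C y L \<Longrightarrow> g' \<in> hom C y L \<Longrightarrow>
      bij_betw (\<lambda>\<xi>. d \<triangleright> \<xi>) (cells C g g') (desc_mor C d0 d1 (d \<odot> g) (\<Psi> \<triangleleft> g) (d \<odot> g') (\<Psi> \<triangleleft> g'))"
  using assms unfolding lax_descent_def by auto

lemma em_objectD:
  assumes "em_object C b t \<mu> \<eta> B u \<chi>"
  shows "B \<in> Obj C" "u \<in> hom C B b" "\<chi> \<in> cells C (t \<odot> u) u"
    and "y \<in> Obj C \<Longrightarrow> bij_betw (\<lambda>g. (u \<odot> g, \<chi> \<triangleleft> g)) (hom C y B) (algebras y)"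
    and "y \<in> Obj C \<Longrightarrow> g \<in> hom C y B \<Longrightarrow> g' \<in> hom C y B \<Longrightarrow>
      bij_betw (\<lambda>\<xi>. u \<triangleright> \<xi>) (cells C g g')
        {\<xi> \<in> cells C (u \<odot> g) (u \<odot> g'). \<xi> \<bullet> (\<chi> \<triangleleft> g) = (\<chi> \<triangleleft> g') \<bullet> (t \<triangleright> \<xi>)}"
  using assms unfolding em_object_def algebras_def by auto

lemma lax_descent_imp_em_object:
  assumes lax: "lax_descent C p P d0 d1 \<alpha> P3 D0 D2 L d \<Psi>"
  shows "em_object C b t \<mu> \<eta> L d (r \<triangleright> \<Psi>)"
proof -
  note L = lax_descentD[OF lax]
  have d: "d \<in> Arr C" "src C d = L" "trg C d = b" using L(2) by (auto simp: hom_iff)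
  have g_simps: "g \<in> Arr C" "src C g = y" "trg C g = L" if "g \<in> hom C y L" for g y
    using that by (auto simp: hom_iff)
  have \<Psi>g: "\<Psi> \<triangleleft> g \<in> cells C (d1 \<odot> d \<odot> g) (d0 \<odot> d \<odot> g)" "r \<triangleright> (\<Psi> \<triangleleft> g) = (r \<triangleright> \<Psi>) \<triangleleft> g"
    if "g \<in> hom C y L" for g y
    using whisker_right_cells[OF L(3), of g] whisker_left_right[OF L(3), of g r] d g_simps[OF that] by simp_all
  have objects_bij: "bij_betw (\<lambda>g. (d \<odot> g, (r \<triangleright> \<Psi>) \<triangleleft> g)) (hom C y L) (algebras y)" if y: "y \<in> Obj C" for y
  proof -
    have "bij_betw ((\<lambda>(h, \<beta>). (h, r \<triangleright> \<beta>)) \<circ> (\<lambda>g. (d \<odot> g, \<Psi> \<triangleleft> g))) (hom C y L) (algebras y)"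
      using bij_betw_trans[OF L(4)[OF y] desc_obj_algebras_bij(1)] .
    then show ?thesis by (rule bij_betw_cong[THEN iffD1, rotated]) (simp add: \<Psi>g(2))
  qed
  have cells_bij: "bij_betw (\<lambda>\<xi>. d \<triangleright> \<xi>) (cells C g g')
      {\<xi> \<in> cells C (d \<odot> g) (d \<odot> g'). \<xi> \<bullet> ((r \<triangleright> \<Psi>) \<triangleleft> g) = ((r \<triangleright> \<Psi>) \<triangleleft> g') \<bullet> (t \<triangleright> \<xi>)}"
    if y: "y \<in> Obj C" and g: "g \<in> hom C y L" "g' \<in> hom C y L" for y g g'
    using L(5)[OF y g] desc_mor_eq[OF _ _ _ _ \<Psi>g(1)[OF g(1)] \<Psi>g(1)[OF g(2)]] \<Psi>g(2)[OF g(1)] \<Psi>g(2)[OF g(2)]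
      d g_simps[OF g(1)] g_simps[OF g(2)] by simp
  show ?thesis
    unfolding em_object_def algebras_def[symmetric]
    using L(1,2) r_whisker_cells[OF d(1,3) L(3)] objects_bij cells_bij by blast
qed

lemma whisker_right_to_descent:
  assumes u: "u \<in> Arr C" "trg C u = b" and \<chi>: "\<chi> \<in> cells C (t \<odot> u) u"
    and g: "g \<in> Arr C" "trg C g = src C u"
  shows "to_descent u \<chi> \<triangleleft> g = to_descent (u \<odot> g) (\<chi> \<triangleleft> g)"
proof -
  have "to_descent u \<chi> \<triangleleft> g = ((d0 \<triangleright> \<chi>) \<triangleleft> g) \<bullet> (\<sigma> \<triangleleft> u \<triangleleft> g)"
    unfolding to_descent_def
    using whisker_right_vcomp[OF sigma_whisker_cells d0_whisker_cells[OF \<chi>], of g] u g by simp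
  also have "(d0 \<triangleright> \<chi>) \<triangleleft> g = d0 \<triangleright> \<chi> \<triangleleft> g" using whisker_left_right[OF \<chi>, of g d0] u g by simp
  also have "\<sigma> \<triangleleft> u \<triangleleft> g = \<sigma> \<triangleleft> (u \<odot> g)" using whisker_right_comp[OF sigma_cells, of u g] u g by simp
  finally show ?thesis unfolding to_descent_def .
qed

lemma em_object_imp_lax_descent:
  assumes em: "em_object C b t \<mu> \<eta> B u \<chi>"
  shows "lax_descent C p P d0 d1 \<alpha> P3 D0 D2 B u (to_descent u \<chi>)"
proof -
  note E = em_objectD[OF em]
  have u: "u \<in> Arr C" "src C u = B" "trg C u = b" using E(2) by (auto simp: hom_iff)
  have g_simps: "g \<in> Arr C" "src C g = y" "trg C g = B" if "g \<in> hom C y B" for g y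
    using that by (auto simp: hom_iff)
  note \<Psi> = to_descent_cells[OF u(1,3) E(3)]
  have \<chi>g: "\<chi> \<triangleleft> g \<in> cells C (t \<odot> u \<odot> g) (u \<odot> g)" if "g \<in> hom C y B" for g y
    using whisker_right_cells[OF E(3), of g] u g_simps[OF that] by simp
  have \<Psi>g: "to_descent u \<chi> \<triangleleft> g = to_descent (u \<odot> g) (\<chi> \<triangleleft> g)" if "g \<in> hom C y B" for g y
    using whisker_right_to_descent[OF u(1,3) E(3)] u g_simps[OF that] by simp
  have objects_bij: "bij_betw (\<lambda>g. (u \<odot> g, to_descent u \<chi> \<triangleleft> g)) (hom C y B)
      (desc_obj C p P d0 d1 \<alpha> P3 D0 D2 y)" if y: "y \<in> Obj C" for y
  proof -
    have "bij_betw ((\<lambda>(h, \<theta>). (h, to_descent h \<theta>)) \<circ> (\<lambda>g. (u \<odot> g, \<chi> \<triangleleft> g))) (hom C y B)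
        (desc_obj C p P d0 d1 \<alpha> P3 D0 D2 y)"
      using bij_betw_trans[OF E(4)[OF y] desc_obj_algebras_bij(2)] .
    then show ?thesis by (rule bij_betw_cong[THEN iffD1, rotated]) (simp add: \<Psi>g)
  qed
  have cells_bij: "bij_betw (\<lambda>\<xi>. u \<triangleright> \<xi>) (cells C g g')
      (desc_mor C d0 d1 (u \<odot> g) (to_descent u \<chi> \<triangleleft> g) (u \<odot> g') (to_descent u \<chi> \<triangleleft> g'))"
    if y: "y \<in> Obj C" and g: "g \<in> hom C y B" "g' \<in> hom C y B" for y g g'
    using E(5)[OF y g] desc_mor_eq[OF _ _ _ _ to_descent_cells[OF _ _ \<chi>g[OF g(1)]]
        to_descent_cells[OF _ _ \<chi>g[OF g(2)]]]
      r_whisker_to_descent[OF _ _ \<chi>g[OF g(1)]] r_whisker_to_descent[OF _ _ \<chi>g[OF g(2)]]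
      \<Psi>g[OF g(1)] \<Psi>g[OF g(2)] u g_simps[OF g(1)] g_simps[OF g(2)] by simp
  show ?thesis
    unfolding lax_descent_def arr_simps(3) using E(1,2) \<Psi> objects_bij cells_bij by blast
qed

lemma pH_eq_pT:
  assumes d: "d \<in> hom C L b" and \<Psi>: "\<Psi> \<in> cells C (d1 \<odot> d) (d0 \<odot> d)"
  shows "pH C p \<alpha> L d \<Psi> = pT C p \<gamma> L d (r \<triangleright> \<Psi>)"
proof -
  have "\<Psi> \<triangleleft> k = \<alpha> \<longleftrightarrow> (r \<triangleright> \<Psi>) \<triangleleft> k = \<gamma>" if k: "k \<in> hom C e L" "d \<odot> k = p" for k
  proof -
    have k_simps: "k \<in> Arr C" "src C k = e" "trg C k = L" "trg C d = b" "src C d = L" "d \<in> Arr C"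
      using k d by (auto simp: hom_iff)
    have "\<Psi> \<triangleleft> k \<in> cells C (d1 \<odot> p) (d0 \<odot> p)"
      using whisker_right_cells[OF \<Psi>, of k] k_simps k(2) by simp
    then have "\<Psi> \<triangleleft> k = \<alpha> \<longleftrightarrow> r \<triangleright> (\<Psi> \<triangleleft> k) = r \<triangleright> \<alpha>"
      using r_whisker_inj[of p p, OF _ _ _ _ _ alpha_cells] by auto
    then show ?thesis using whisker_left_right[OF \<Psi>, of k r] r_spec(4) k_simps by simp
  qed
  then show ?thesis unfolding pH_def pT_def by (metis arr_simps(2))
qed

theorem em_equivalence_iff_lax_descent_equivalence:
  "(\<exists>B u \<chi>. em_object C b t \<mu> \<eta> B u \<chi> \<and> equivalence C (pT C p \<gamma> B u \<chi>)) \<longleftrightarrow>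
   (\<exists>L d \<Psi>. lax_descent C p P d0 d1 \<alpha> P3 D0 D2 L d \<Psi> \<and> equivalence C (pH C p \<alpha> L d \<Psi>))"
proof
  assume "\<exists>B u \<chi>. em_object C b t \<mu> \<eta> B u \<chi> \<and> equivalence C (pT C p \<gamma> B u \<chi>)"
  then obtain B u \<chi> where em: "em_object C b t \<mu> \<eta> B u \<chi>" and eq: "equivalence C (pT C p \<gamma> B u \<chi>)"
    by blast
  note E = em_objectD[OF em]
  have u: "u \<in> Arr C" "trg C u = b" using E(2) by (auto simp: hom_iff)
  have "pH C p \<alpha> B u (to_descent u \<chi>) = pT C p \<gamma> B u \<chi>"
    using pH_eq_pT[OF E(2) to_descent_cells[OF u E(3)]] r_whisker_to_descent[OF u E(3)] by simp
  then show "\<exists>L d \<Psi>. lax_descent C p P d0 d1 \<alpha> P3 D0 D2 L d \<Psi> \<and> equivalence C (pH C p \<alpha> L d \<Psi>)"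
    using em_object_imp_lax_descent[OF em] eq by metis
next
  assume "\<exists>L d \<Psi>. lax_descent C p P d0 d1 \<alpha> P3 D0 D2 L d \<Psi> \<and> equivalence C (pH C p \<alpha> L d \<Psi>)"
  then obtain L d \<Psi> where lax: "lax_descent C p P d0 d1 \<alpha> P3 D0 D2 L d \<Psi>"
    and eq: "equivalence C (pH C p \<alpha> L d \<Psi>)" by blast
  note L = lax_descentD[OF lax]
  show "\<exists>B u \<chi>. em_object C b t \<mu> \<eta> B u \<chi> \<and> equivalence C (pT C p \<gamma> B u \<chi>)"
    using lax_descent_imp_em_object[OF lax] eq pH_eq_pT[OF L(2,3)] by metis
qed

end

section \<open>Monadicity\<close>

context cokernel
begin

lemma codensity_comparisonI:
  "ran C p p t \<gamma> \<Longrightarrow> \<sigma> \<in> cells C d1 (d0 \<odot> t) \<Longrightarrow> (d0 \<triangleright> \<gamma>) \<bullet> (\<sigma> \<triangleleft> p) = \<alpha> \<Longrightarrow>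
   codensity_comparison C p e b P d0 d1 \<alpha> P3 D0 D2 t \<gamma> \<sigma>"
  by (intro codensity_comparison.intro cokernel.intro two_category_axioms cokernel_axioms
      codensity_comparison_axioms.intro)

lemma codensity_comparison_if_preserved:
  assumes ran: "ran C p p t \<gamma>" and pres: "preserves_ran C p p t \<gamma> d0"
  obtains \<sigma> where "codensity_comparison C p e b P d0 d1 \<alpha> P3 D0 D2 t \<gamma> \<sigma>"
proof -
  have "ran C p (d0 \<odot> p) (d0 \<odot> t) (d0 \<triangleright> \<gamma>)" using pres unfolding preserves_ran_def by blast
  then obtain \<sigma> where "\<sigma> \<in> cells C d1 (d0 \<odot> t)" "(d0 \<triangleright> \<gamma>) \<bullet> (\<sigma> \<triangleleft> p) = \<alpha>"
    using ran_factor[of p "d0 \<odot> p" "d0 \<odot> t" "d0 \<triangleright> \<gamma>" d1 \<alpha>] alpha_cells by (auto simp: hom_iff)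
  then show thesis using that codensity_comparisonI[OF ran] by blast
qed

end

lemma (in codensity_comparison) codensity_comparison_other_ran:
  assumes ran': "ran C p p t' \<gamma>'"
  obtains \<sigma>' where "codensity_comparison C p e b P d0 d1 \<alpha> P3 D0 D2 t' \<gamma>' \<sigma>'"
proof -
  have t': "t' \<in> Arr C" "src C t' = b" "trg C t' = b" and \<gamma>': "\<gamma>' \<in> cells C (t' \<odot> p) p"
    using ran' unfolding ran_def by (auto simp: hom_iff)
  obtain \<psi> where \<psi>: "\<psi> \<in> cells C t t'" and \<psi>\<gamma>: "\<gamma>' \<bullet> (\<psi> \<triangleleft> p) = \<gamma>"
    using ran_factor[OF ran', of t \<gamma>] gamma_cells by (auto simp: hom_iff)
  define \<sigma>' where "\<sigma>' = (d0 \<triangleright> \<psi>) \<bullet> \<sigma>"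
  have \<psi>p: "\<psi> \<triangleleft> p \<in> cells C (t \<odot> p) (t' \<odot> p)" using whisker_right_cells[OF \<psi>, of p] by simp
  have "\<sigma>' \<in> cells C d1 (d0 \<odot> t')"
    unfolding \<sigma>'_def using vcomp_cells[OF sigma_cells whisker_left_cells[OF \<psi>, of d0]] t' by simp
  moreover have "(d0 \<triangleright> \<gamma>') \<bullet> (\<sigma>' \<triangleleft> p) = \<alpha>"
  proof -
    have "\<sigma>' \<triangleleft> p = (d0 \<triangleright> \<psi> \<triangleleft> p) \<bullet> (\<sigma> \<triangleleft> p)"
      unfolding \<sigma>'_def
      using whisker_right_vcomp[OF sigma_cells whisker_left_cells[OF \<psi>, of d0], of p]
        whisker_left_right[OF \<psi>, of p d0] t' by simp
    then have "(d0 \<triangleright> \<gamma>') \<bullet> (\<sigma>' \<triangleleft> p) = ((d0 \<triangleright> \<gamma>') \<bullet> (d0 \<triangleright> \<psi> \<triangleleft> p)) \<bullet> (\<sigma> \<triangleleft> p)"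
      using vcomp_assoc[OF sigma_whisker_cells d0_whisker_cells[OF \<psi>p] d0_whisker_cells[OF \<gamma>']] t' by simp
    also have "(d0 \<triangleright> \<gamma>') \<bullet> (d0 \<triangleright> \<psi> \<triangleleft> p) = d0 \<triangleright> \<gamma>"
      using whisker_left_vcomp[OF \<psi>p \<gamma>', of d0] \<psi>\<gamma> by simp
    finally show ?thesis using alpha_factors by simp
  qed
  ultimately show thesis using that codensity_comparisonI[OF ran'] by blast
qed

theorem (in cokernel) monadic_iff_effective_faithful:
  assumes "ran C p p t \<gamma>" "preserves_ran C p p t \<gamma> d0"
  shows "monadic C p \<longleftrightarrow> effective_faithful C p P d0 d1 \<alpha> P3 D0 D2"
proof -
  obtain \<sigma> where cc: "codensity_comparison C p e b P d0 d1 \<alpha> P3 D0 D2 t \<gamma> \<sigma>"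
    using codensity_comparison_if_preserved[OF assms] .
  show ?thesis
  proof
    assume "monadic C p"
    then obtain t' \<gamma>' where ran': "ran C p p t' \<gamma>'" and
      em: "\<exists>B u \<chi>. em_object C b t' (cod_mult C p t' \<gamma>') (cod_unit C p t' \<gamma>') B u \<chi> \<and>
        equivalence C (pT C p \<gamma>' B u \<chi>)"
      unfolding monadic_def arr_simps(3) by blast
    obtain \<sigma>' where cc': "codensity_comparison C p e b P d0 d1 \<alpha> P3 D0 D2 t' \<gamma>' \<sigma>'"
      using codensity_comparison.codensity_comparison_other_ran[OF cc ran'] .
    show "effective_faithful C p P d0 d1 \<alpha> P3 D0 D2"
      unfolding effective_faithful_def
      using cokernel_diagram codensity_comparison.em_equivalence_iff_lax_descent_equivalence[OF cc'] em
      by blast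
  next
    assume "effective_faithful C p P d0 d1 \<alpha> P3 D0 D2"
    then show "monadic C p"
      unfolding monadic_def effective_faithful_def arr_simps(3)
      using assms(1) codensity_comparison.em_equivalence_iff_lax_descent_equivalence[OF cc] by blast
  qed
qed

section \<open>Comonadicity by duality\<close>

lemma co_simps [simp]:
  "Obj (co C) = Obj C" "Arr (co C) = Arr C" "src (co C) = src C" "trg (co C) = trg C"
  "Cell (co C) = Cell C" "dom2 (co C) = cod2 C" "cod2 (co C) = dom2 C" "cmp (co C) = cmp C"
  "ide (co C) = ide C" "vc (co C) = (\<lambda>\<beta> \<alpha>. vc C \<alpha> \<beta>)" "hc (co C) = hc C" "i2 (co C) = i2 C"
  and hom_co [simp]: "hom (co C) = hom C"
  and cells_co [simp]: "cells (co C) f g = cells C g f"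
  by (auto simp: co_def hom_def cells_def fun_eq_iff)

lemma (in two_category) two_category_co: "two_category (co C)"
proof unfold_locales
  fix f f' f'' g g' g'' \<alpha> \<alpha>' \<beta> \<beta>'
  assume "\<alpha> \<in> cells (co C) f f'" "\<alpha>' \<in> cells (co C) f' f''" "\<beta> \<in> cells (co C) g g'"
    "\<beta>' \<in> cells (co C) g' g''" "trg (co C) f = src (co C) g"
  then show "hc (co C) (vc (co C) \<beta>' \<beta>) (vc (co C) \<alpha>' \<alpha>) =
      vc (co C) (hc (co C) \<beta>' \<alpha>') (hc (co C) \<beta> \<alpha>)"
    using interchange[of \<alpha>' f'' f' \<alpha> f \<beta>' g'' g' \<beta> g] cells_arr[of \<alpha> f' f] cells_arr[of \<alpha>' f'' f']
      cells_arr[of \<beta> g' g] cells_arr[of \<beta>' g'' g']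
    by simp
qed (use obj_src_trg ide_hom comp_hom comp_ide comp_assoc' cell_arrs id2_cells vcomp_cells vcomp_id
      vcomp_assoc hcomp_cells hcomp_id2 hcomp_assoc hcomp_unit cells_arr in \<open>auto simp: cells_def\<close>)

lemma bij_betw_reindex:
  assumes "bij_betw f A B" "inj s" "\<And>x. x \<in> A \<Longrightarrow> g x = s (f x)" "B' = s ` B"
  shows "bij_betw g A B'"
proof -
  have "bij_betw (s \<circ> f) A B'"
    using bij_betw_trans[OF assms(1) inj_on_imp_bij_betw[OF inj_on_subset[OF assms(2)]]] assms(4) by simp
  then show ?thesis by (rule bij_betw_cong[THEN iffD1, rotated]) (simp add: assms(3))
qed

lemma opcomma_co:
  assumes "opcomma C p P d0 d1 \<alpha>"
  shows "opcomma (co C) p P d1 d0 \<alpha>"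
  unfolding opcomma_def co_simps hom_co cells_co
proof (intro conjI ballI)
  show "p \<in> Arr C" "P \<in> Obj C" "d1 \<in> hom C (trg C p) P" "d0 \<in> hom C (trg C p) P"
    "\<alpha> \<in> cells C (cmp C d1 p) (cmp C d0 p)"
    using assms unfolding opcomma_def by auto
next
  fix y assume y: "y \<in> Obj C"
  show "bij_betw (\<lambda>h. (cmp C h d1, cmp C h d0, hc C (i2 C h) \<alpha>)) (hom C P y)
      {(h0, h1, \<beta>). h0 \<in> hom C (trg C p) y \<and> h1 \<in> hom C (trg C p) y \<and>
        \<beta> \<in> cells C (cmp C h0 p) (cmp C h1 p)}"
  proof (rule bij_betw_reindex[where s = "\<lambda>(a, b, c). (b, a, c)"])
    show "bij_betw (\<lambda>h. (cmp C h d0, cmp C h d1, hc C (i2 C h) \<alpha>)) (hom C P y)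
      {(h0, h1, \<beta>). h0 \<in> hom C (trg C p) y \<and> h1 \<in> hom C (trg C p) y \<and>
        \<beta> \<in> cells C (cmp C h1 p) (cmp C h0 p)}"
      using assms y unfolding opcomma_def by blast
  qed (auto simp: inj_def image_iff)
  fix h h' assume h: "h \<in> hom C P y" "h' \<in> hom C P y"
  show "bij_betw (\<lambda>\<xi>. (hc C \<xi> (i2 C d1), hc C \<xi> (i2 C d0))) (cells C h' h)
      {(\<xi>0, \<xi>1). \<xi>0 \<in> cells C (cmp C h' d1) (cmp C h d1) \<and> \<xi>1 \<in> cells C (cmp C h' d0) (cmp C h d0) \<and>
        vc C (hc C (i2 C h) \<alpha>) (hc C \<xi>0 (i2 C p)) = vc C (hc C \<xi>1 (i2 C p)) (hc C (i2 C h') \<alpha>)}"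
  proof (rule bij_betw_reindex[where s = "\<lambda>(a, b). (b, a)"])
    show "bij_betw (\<lambda>\<xi>. (hc C \<xi> (i2 C d0), hc C \<xi> (i2 C d1))) (cells C h' h)
      {(\<xi>0, \<xi>1). \<xi>0 \<in> cells C (cmp C h' d0) (cmp C h d0) \<and> \<xi>1 \<in> cells C (cmp C h' d1) (cmp C h d1) \<and>
        vc C (hc C \<xi>0 (i2 C p)) (hc C (i2 C h') \<alpha>) = vc C (hc C (i2 C h) \<alpha>) (hc C \<xi>1 (i2 C p))}"
      using assms y h unfolding opcomma_def by blast
  qed (auto simp: inj_def image_iff)
qed

lemma pushout2_co:
  assumes "pushout2 C f0 f1 Q q0 q1"
  shows "pushout2 (co C) f1 f0 Q q1 q0"
  unfolding pushout2_def co_simps hom_co cells_co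
proof (intro conjI ballI)
  show "f1 \<in> Arr C" "f0 \<in> Arr C" "src C f1 = src C f0" "Q \<in> Obj C" "q1 \<in> hom C (trg C f1) Q"
    "q0 \<in> hom C (trg C f0) Q" "cmp C q1 f1 = cmp C q0 f0"
    using assms unfolding pushout2_def by auto
next
  fix y assume y: "y \<in> Obj C"
  show "bij_betw (\<lambda>k. (cmp C k q1, cmp C k q0)) (hom C Q y)
      {(k0, k1). k0 \<in> hom C (trg C f1) y \<and> k1 \<in> hom C (trg C f0) y \<and> cmp C k0 f1 = cmp C k1 f0}"
  proof (rule bij_betw_reindex[where s = "\<lambda>(a, b). (b, a)"])
    show "bij_betw (\<lambda>k. (cmp C k q0, cmp C k q1)) (hom C Q y)
      {(k0, k1). k0 \<in> hom C (trg C f0) y \<and> k1 \<in> hom C (trg C f1) y \<and> cmp C k0 f0 = cmp C k1 f1}"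
      using assms y unfolding pushout2_def by blast
  qed (auto simp: inj_def image_iff)
  fix k k' assume k: "k \<in> hom C Q y" "k' \<in> hom C Q y"
  show "bij_betw (\<lambda>\<xi>. (hc C \<xi> (i2 C q1), hc C \<xi> (i2 C q0))) (cells C k' k)
      {(\<xi>0, \<xi>1). \<xi>0 \<in> cells C (cmp C k' q1) (cmp C k q1) \<and> \<xi>1 \<in> cells C (cmp C k' q0) (cmp C k q0) \<and>
        hc C \<xi>0 (i2 C f1) = hc C \<xi>1 (i2 C f0)}"
  proof (rule bij_betw_reindex[where s = "\<lambda>(a, b). (b, a)"])
    show "bij_betw (\<lambda>\<xi>. (hc C \<xi> (i2 C q0), hc C \<xi> (i2 C q1))) (cells C k' k)
      {(\<xi>0, \<xi>1). \<xi>0 \<in> cells C (cmp C k' q0) (cmp C k q0) \<and> \<xi>1 \<in> cells C (cmp C k' q1) (cmp C k q1) \<and>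
        hc C \<xi>0 (i2 C f0) = hc C \<xi>1 (i2 C f1)}"
      using assms y k unfolding pushout2_def by blast
  qed (auto simp: inj_def image_iff)
qed

lemma cokernel_diagram_co:
  "cokernel_diagram C p P d0 d1 \<alpha> P3 D0 D2 \<Longrightarrow> cokernel_diagram (co C) p P d1 d0 \<alpha> P3 D2 D0"
  unfolding cokernel_diagram_def by (simp add: opcomma_co pushout2_co)

lemma cokD1_co: "cokD1 (co C) p P d1 d0 \<alpha> P3 D2 D0 = cokD1 C p P d0 d1 \<alpha> P3 D0 D2"
  unfolding cokD1_def co_simps hom_co by (rule arg_cong[where f = The]) (rule ext, blast)

lemma cokS0_co: "cokS0 (co C) p P d1 d0 \<alpha> = cokS0 C p P d0 d1 \<alpha>"
  unfolding cokS0_def co_simps hom_co by (rule arg_cong[where f = The]) (rule ext, blast)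

lemma lax_descent_co:
  "lax_descent (co C) p P d1 d0 \<alpha> P3 D2 D0 L d \<Psi> \<longleftrightarrow> lax_descent C p P d0 d1 \<alpha> P3 D0 D2 L d \<Psi>"
proof -
  have "desc_obj (co C) p P d1 d0 \<alpha> P3 D2 D0 y = desc_obj C p P d0 d1 \<alpha> P3 D0 D2 y" for y
    unfolding desc_obj_def cokD1_co cokS0_co by simp
  moreover have "desc_mor (co C) d1 d0 h1 \<beta>1 h0 \<beta>0 = desc_mor C d0 d1 h0 \<beta>0 h1 \<beta>1" for h0 \<beta>0 h1 \<beta>1
    unfolding desc_mor_def by auto
  ultimately show ?thesis unfolding lax_descent_def co_simps hom_co cells_co by simp blast
qed

lemma equivalence_co: "equivalence (co C) f \<longleftrightarrow> equivalence C f"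
proof -
  have inverse_cell: "\<exists>\<theta>' \<in> cells C g f. invertible2 C \<theta>'"
    if "\<theta> \<in> cells C f g" "invertible2 C \<theta>" for \<theta> f g
    using that unfolding invertible2_def cells_def by auto
  have "invertible2 (co C) \<theta> \<longleftrightarrow> invertible2 C \<theta>" for \<theta>
    unfolding invertible2_def co_simps cells_co by auto
  then show ?thesis
    unfolding equivalence_def co_simps hom_co cells_co using inverse_cell by metis
qed

lemma effective_faithful_co:
  assumes "cokernel_diagram C p P d0 d1 \<alpha> P3 D0 D2"
  shows "effective_faithful (co C) p P d1 d0 \<alpha> P3 D2 D0 \<longleftrightarrow> effective_faithful C p P d0 d1 \<alpha> P3 D0 D2"
proof -
  have "pH (co C) p \<alpha> L d \<Psi> = pH C p \<alpha> L d \<Psi>" for L d \<Psi>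
    unfolding pH_def co_simps hom_co by simp
  then show ?thesis
    unfolding effective_faithful_def lax_descent_co equivalence_co
    using assms cokernel_diagram_co[OF assms] by simp
qed

theorem (in cokernel) comonadic_iff_effective_faithful:
  assumes "lan C p p t \<gamma>" "preserves_lan C p p t \<gamma> d1"
  shows "comonadic C p \<longleftrightarrow> effective_faithful C p P d0 d1 \<alpha> P3 D0 D2"
proof -
  interpret co: cokernel "co C" p e b P d1 d0 \<alpha> P3 D2 D0
    using two_category_co p_hom cokernel_diagram_co[OF cokernel_diagram]
    by (intro cokernel.intro cokernel_axioms.intro) simp_all
  show ?thesis
    using co.monadic_iff_effective_faithful assms effective_faithful_co[OF cokernel_diagram]
    unfolding comonadic_def lan_def preserves_lan_def by blast
qed

theorem corollary5p9:
  fixes C :: "('o,'a,'c) tcat" and p :: 'a and e b P P3 :: 'o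
    and d0 d1 D0 D2 :: 'a and \<alpha> :: 'c
  assumes "twocat C"
    and "p \<in> hom C e b"
    and "cokernel_diagram C p P d0 d1 \<alpha> P3 D0 D2"
  shows "((\<exists>t \<gamma>. ran C p p t \<gamma> \<and> preserves_ran C p p t \<gamma> d0) \<longrightarrow>
           (monadic C p \<longleftrightarrow> effective_faithful C p P d0 d1 \<alpha> P3 D0 D2)) \<and>
         ((\<exists>t \<gamma>. lan C p p t \<gamma> \<and> preserves_lan C p p t \<gamma> d1) \<longrightarrow>
           (comonadic C p \<longleftrightarrow> effective_faithful C p P d0 d1 \<alpha> P3 D0 D2))"
proof -
  interpret cokernel C p e b P d0 d1 \<alpha> P3 D0 D2
    using assms by (intro cokernel.intro cokernel_axioms.intro two_category_iff_twocat[THEN iffD2])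
  show ?thesis using monadic_iff_effective_faithful comonadic_iff_effective_faithful by blast
qed

end
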